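(* Let $\varepsilon\in\{1,-1\}$, let $\mathbb{M}^2(\varepsilon)$ be $\mathbb{S}^2$ if $\varepsilon=1$ and $\mathbb{H}^2$ if $\varepsilon=-1$, and let $\psi:S\to\mathbb{M}^2(\varepsilon)\times\mathbb{R}$ be an immersed surface with constant extrinsic curvature $K>0$, normal $N$ chosen so that $II$ is positive definite. For a local conformal parameter $z$ of $II$, with $I=E\,dz^2+2F|dz|^2+\bar E\,d\bar z^2$, define $Q=E+g(\nu)h_z^2$. Then $$|Q_{\bar z}|^2\le\frac{K\,g'(\nu)^2(1-\nu^2)^2|h_z|^2}{4\chi(\nu)}\,|Q|^2.$$
   Context: $\mathbb{M}^2(\varepsilon)\times\mathbb{R}$ carries the product metric; $h$ is the height function, $\nu=\langle N,\partial_t\rangle$. The real analytic functions $g,\chi$ are $$g(\nu)=\frac{\nu^2-1+\varepsilon K\left(e^{\varepsilon(1-\nu^2)/K}-1\right)}{(1-\nu^2)^2},\qquad \chi(\nu)=\frac{\varepsilon K\left(e^{\varepsilon(1-\nu^2)/K}-1\right)}{1-\nu^2}$$ (extended analytically to $\nu=\pm1$; $\chi>0$ on $[-1,1]$). $Q\,dz^2$ is the $(2,0)$-part, with respect to the conformal structure of $II$, of the quadratic form $A=I+g(\nu)\,dh^2$. *)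

theory Defs
  imports "HOL-Analysis.Analysis"
begin

text \<open>Partial derivatives w.r.t. the real coordinates x, y of the parameter z = x + i y.
  False = d/dx, True = d/dy.\<close>
definition partial :: "bool \<Rightarrow> (complex \<Rightarrow> 'a::real_normed_vector) \<Rightarrow> complex \<Rightarrow> 'a" where
  "partial d f p = frechet_derivative f (at p) (if d then \<i> else 1)"

fun pd :: "bool list \<Rightarrow> (complex \<Rightarrow> 'a::real_normed_vector) \<Rightarrow> complex \<Rightarrow> 'a" where
  "pd [] f = f"
| "pd (d # ds) f = partial d (pd ds f)"

definition smooth_on :: "complex set \<Rightarrow> (complex \<Rightarrow> 'a::real_normed_vector) \<Rightarrow> bool" where
  "smooth_on U f \<longleftrightarrow> (\<forall>ds. \<forall>p\<in>U. pd ds f differentiable (at p))"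

text \<open>Ambient model: M2(1) = unit sphere in R^3, M2(-1) = upper sheet of the hyperboloid
  in Lorentz space (metric dx1^2+dx2^2-dx3^2); the last coordinate is the R factor.\<close>
definition amb :: "real \<Rightarrow> real^4 \<Rightarrow> real^4 \<Rightarrow> real" where
  "amb \<epsilon> u v = (u $ 1)*(v $ 1) + (u $ 2)*(v $ 2) + \<epsilon>*(u $ 3)*(v $ 3) + (u $ 4)*(v $ 4)"

definition amb3 :: "real \<Rightarrow> real^4 \<Rightarrow> real^4 \<Rightarrow> real" where
  "amb3 \<epsilon> u v = (u $ 1)*(v $ 1) + (u $ 2)*(v $ 2) + \<epsilon>*(u $ 3)*(v $ 3)"

definition in_M2R :: "real \<Rightarrow> real^4 \<Rightarrow> bool" where
  "in_M2R \<epsilon> q \<longleftrightarrow> amb3 \<epsilon> q q = \<epsilon> \<and> (\<epsilon> = -1 \<longrightarrow> (q $ 3) > 0)"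

text \<open>The analytic functions g and chi, extended at nu = +-1 by their limits.\<close>
definition gfun :: "real \<Rightarrow> real \<Rightarrow> real \<Rightarrow> real" where
  "gfun \<epsilon> K \<nu> = (if \<nu>^2 = 1 then \<epsilon> / (2*K)
     else (\<nu>^2 - 1 + \<epsilon>*K*(exp (\<epsilon>*(1-\<nu>^2)/K) - 1)) / (1-\<nu>^2)^2)"

definition chi :: "real \<Rightarrow> real \<Rightarrow> real \<Rightarrow> real" where
  "chi \<epsilon> K \<nu> = (if \<nu>^2 = 1 then 1
     else \<epsilon>*K*(exp (\<epsilon>*(1-\<nu>^2)/K) - 1) / (1-\<nu>^2))"

definition fundI :: "real \<Rightarrow> (complex \<Rightarrow> real^4) \<Rightarrow> bool \<Rightarrow> bool \<Rightarrow> complex \<Rightarrow> real" where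
  "fundI \<epsilon> \<psi> i j p = amb \<epsilon> (partial i \<psi> p) (partial j \<psi> p)"

definition fundII :: "real \<Rightarrow> (complex \<Rightarrow> real^4) \<Rightarrow> (complex \<Rightarrow> real^4) \<Rightarrow> bool \<Rightarrow> bool \<Rightarrow> complex \<Rightarrow> real" where
  "fundII \<epsilon> \<psi> N i j p = - amb \<epsilon> (partial i \<psi> p) (partial j N p)"

text \<open>E = I(d/dz, d/dz) where d/dz = (d/dx - i d/dy)/2.\<close>
definition Ecoef :: "real \<Rightarrow> (complex \<Rightarrow> real^4) \<Rightarrow> complex \<Rightarrow> complex" where
  "Ecoef \<epsilon> \<psi> p = Complex ((fundI \<epsilon> \<psi> False False p - fundI \<epsilon> \<psi> True True p) / 4)
                             (- fundI \<epsilon> \<psi> False True p / 2)"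

definition height :: "(complex \<Rightarrow> real^4) \<Rightarrow> complex \<Rightarrow> real" where
  "height \<psi> p = \<psi> p $ 4"

definition h_z :: "(complex \<Rightarrow> real^4) \<Rightarrow> complex \<Rightarrow> complex" where
  "h_z \<psi> p = Complex (partial False (height \<psi>) p / 2) (- partial True (height \<psi>) p / 2)"

definition nu :: "(complex \<Rightarrow> real^4) \<Rightarrow> complex \<Rightarrow> real" where
  "nu N p = N p $ 4"

definition Qfun :: "real \<Rightarrow> real \<Rightarrow> (complex \<Rightarrow> real^4) \<Rightarrow> (complex \<Rightarrow> real^4) \<Rightarrow> complex \<Rightarrow> complex" where
  "Qfun \<epsilon> K \<psi> N p = Ecoef \<epsilon> \<psi> p + complex_of_real (gfun \<epsilon> K (nu N p)) * (h_z \<psi> p)^2"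

definition d_zbar :: "(complex \<Rightarrow> complex) \<Rightarrow> complex \<Rightarrow> complex" where
  "d_zbar F p = (partial False F p + \<i> * partial True F p) / 2"

end

theory Submission
  imports Defs "HOL-Real_Asymp.Real_Asymp"
begin

text \<open>
  Write a, b, c for the coefficients of the first fundamental form, Dt = ac - b^2,
  h1, h2 for the partial derivatives of the height and nu for the vertical part of N.
  (1) Calculus: Leibniz, chain and linearity rules for the coordinate partial derivatives and
      for d/dzbar, and Schwarz's theorem on mixed partials of smooth maps.
  (2) At each point, the tangent vectors X = psi_x, Y = psi_y, the normal N and the horizontal
      position vector pbar(psi) form a basis of R^4 in which the ambient form is block diagonal;
      expanding in this frame turns every pairing into an expression in a few scalars.
  (3) Geometry: differentiating the constraints and the Gauss equation lam^2 = K Dt, and using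
      the Codazzi equations, gives the tangential parts of the coordinate Laplacian of psi, of
      grad nu, and of Delta h in terms of (a, b, c, lam, h1, h2, nu).
  (4) Using the ODE satisfied by g, Q_zbar factorises as lam g'(nu) C (h2 + i h1) / (8 Dt) with
      C = h2 (c h1 - b h2) - h1 (a h2 - b h1).
  (5) An algebraic discriminant identity (adjugate_square_identity) bounds chi C^2 by
      4 Dt (1-nu^2)^2 |Q|^2, and the estimate follows.
\<close>

section \<open>Partial derivatives in the coordinates of the parameter plane\<close>

definition dir :: "bool \<Rightarrow> complex" where
  "dir d = (if d then \<i> else 1)"

lemma partial_frechet: "partial d f p = frechet_derivative f (at p) (dir d)"
  by (simp add: partial_def dir_def)

lemma partial_has: "(f has_derivative D) (at p) \<Longrightarrow> partial d f p = D (dir d)"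
  unfolding partial_frechet using frechet_derivative_at by metis

lemma partial_cong_open:
  assumes "open U" "p \<in> U" "\<And>q. q \<in> U \<Longrightarrow> f q = g q"
  shows "partial d f p = partial d g p"
proof -
  have "\<And>D. (f has_derivative D) (at p) \<longleftrightarrow> (g has_derivative D) (at p)"
    using has_derivative_transform_within_open assms by metis
  then show ?thesis unfolding partial_def frechet_derivative_def by simp
qed

lemma differentiable_cong_open:
  assumes "open U" "p \<in> U" "\<And>q. q \<in> U \<Longrightarrow> f q = g q" "g differentiable (at p)"
  shows "f differentiable (at p)"
  using assms has_derivative_transform_within_open unfolding differentiable_def by metis

lemma partial_const_on:
  assumes "open U" "p \<in> U" "\<And>q. q \<in> U \<Longrightarrow> f q = (c::real)"
  shows "partial d f p = 0"
proof -
  have "partial d f p = partial d (\<lambda>q. c) p" by (rule partial_cong_open[OF assms])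
  also have "\<dots> = 0" using partial_has[OF has_derivative_const[of c "at p"], of d] by simp
  finally show ?thesis .
qed

lemma partial_linear:
  assumes L: "bounded_linear L" and F: "F differentiable (at p)"
  shows "partial d (\<lambda>q. L (F q)) p = L (partial d F p)"
    and "(\<lambda>q. L (F q)) differentiable (at p)"
proof -
  have D: "((\<lambda>q. L (F q)) has_derivative (\<lambda>v. L (frechet_derivative F (at p) v))) (at p)"
    using bounded_linear.has_derivative[OF L F[THEN frechet_derivative_works[THEN iffD1]]] .
  show "partial d (\<lambda>q. L (F q)) p = L (partial d F p)"
    using partial_has[OF D, of d] by (simp add: partial_frechet)
  show "(\<lambda>q. L (F q)) differentiable (at p)"
    using D differentiable_def by blast
qed

lemmas partial_nth = partial_linear[OF bounded_linear_vec_nth]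

lemma partial_cmult:
  fixes f :: "complex \<Rightarrow> 'a::real_normed_algebra"
  assumes "f differentiable (at p)"
  shows "partial d (\<lambda>q. c * f q) p = c * partial d f p"
  using partial_linear(1)[OF bounded_linear_mult_right assms] .

lemma partial_add:
  fixes f g :: "complex \<Rightarrow> 'a::real_normed_vector"
  assumes "f differentiable (at p)" "g differentiable (at p)"
  shows "partial d (\<lambda>q. f q + g q) p = partial d f p + partial d g p"
  using partial_has[OF has_derivative_add[OF assms[THEN frechet_derivative_works[THEN iffD1]]]]
  by (simp add: partial_frechet)

lemma partial_diff:
  fixes f g :: "complex \<Rightarrow> 'a::real_normed_vector"
  assumes "f differentiable (at p)" "g differentiable (at p)"
  shows "partial d (\<lambda>q. f q - g q) p = partial d f p - partial d g p"
  using partial_has[OF has_derivative_diff[OF assms[THEN frechet_derivative_works[THEN iffD1]]]]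
  by (simp add: partial_frechet)

lemma partial_bilinear:
  assumes B: "bounded_bilinear B" and F: "F differentiable (at p)" and G: "G differentiable (at p)"
  shows "partial d (\<lambda>q. B (F q) (G q)) p = B (partial d F p) (G p) + B (F p) (partial d G p)"
    and "(\<lambda>q. B (F q) (G q)) differentiable (at p)"
proof -
  have D: "((\<lambda>q. B (F q) (G q)) has_derivative
      (\<lambda>v. B (F p) (frechet_derivative G (at p) v) + B (frechet_derivative F (at p) v) (G p))) (at p)"
    using bounded_bilinear.FDERIV[OF B F[THEN frechet_derivative_works[THEN iffD1]]
        G[THEN frechet_derivative_works[THEN iffD1]]] .
  show "partial d (\<lambda>q. B (F q) (G q)) p = B (partial d F p) (G p) + B (F p) (partial d G p)"
    using partial_has[OF D, of d] by (simp add: partial_frechet)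
  show "(\<lambda>q. B (F q) (G q)) differentiable (at p)"
    using D differentiable_def by blast
qed

lemmas partial_mult = partial_bilinear[OF bounded_bilinear_mult]

lemma partial_Complex:
  fixes R J :: "complex \<Rightarrow> real"
  assumes "R differentiable (at p)" "J differentiable (at p)"
  shows "partial d (\<lambda>q. Complex (R q) (J q)) p = Complex (partial d R p) (partial d J p)"
    and "(\<lambda>q. Complex (R q) (J q)) differentiable (at p)"
proof -
  have D: "((\<lambda>q. of_real (R q) + \<i> * of_real (J q)) has_derivative
        (\<lambda>v. of_real (frechet_derivative R (at p) v) + \<i> * of_real (frechet_derivative J (at p) v))) (at p)"
    by (intro has_derivative_add has_derivative_mult_right
        bounded_linear.has_derivative[OF bounded_linear_of_real]
        assms[THEN frechet_derivative_works[THEN iffD1]])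
  have C: "(\<lambda>q. Complex (R q) (J q)) = (\<lambda>q. of_real (R q) + \<i> * of_real (J q))"
    by (simp add: Complex_eq)
  show "partial d (\<lambda>q. Complex (R q) (J q)) p = Complex (partial d R p) (partial d J p)"
    unfolding C using partial_has[OF D, of d] by (simp add: partial_frechet complex_eq_iff)
  show "(\<lambda>q. Complex (R q) (J q)) differentiable (at p)"
    unfolding C using D differentiable_def by blast
qed

lemma partial_chain:
  fixes f :: "complex \<Rightarrow> real"
  assumes "(g has_real_derivative D) (at (f p))" "f differentiable (at p)"
  shows "partial d (\<lambda>q. g (f q)) p = D * partial d f p"
    and "(\<lambda>q. g (f q)) differentiable (at p)"
proof -
  have "((\<lambda>q. g (f q)) has_derivative (\<lambda>v. D * frechet_derivative f (at p) v)) (at p)"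
    using has_derivative_compose[OF assms(2)[THEN frechet_derivative_works[THEN iffD1]]
        assms(1)[unfolded has_field_derivative_def]]
    by (simp add: o_def mult.commute)
  then show "partial d (\<lambda>q. g (f q)) p = D * partial d f p"
    and "(\<lambda>q. g (f q)) differentiable (at p)"
    using partial_has partial_frechet differentiable_def by metis+
qed

lemma partial_shift:
  fixes f :: "complex \<Rightarrow> 'a::real_normed_vector"
  assumes "f differentiable (at (z + c))"
  shows "partial d (\<lambda>w. f (w + c)) z = partial d f (z + c)"
    and "(\<lambda>w. f (w + c)) differentiable (at z)"
proof -
  have "((\<lambda>w. w + c) has_derivative (\<lambda>w. w)) (at z)" by (auto intro!: derivative_eq_intros)
  from has_derivative_compose[OF this assms[THEN frechet_derivative_works[THEN iffD1]]]
  have "((\<lambda>w. f (w + c)) has_derivative frechet_derivative f (at (z + c))) (at z)"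
    by (simp add: o_def)
  then show "partial d (\<lambda>w. f (w + c)) z = partial d f (z + c)"
    and "(\<lambda>w. f (w + c)) differentiable (at z)"
    using partial_has partial_frechet differentiable_def by metis+
qed

lemma pd_append: "pd (ds @ [d]) f = pd ds (partial d f)"
  by (induction ds) auto

lemma smooth_on_partial: "smooth_on U f \<Longrightarrow> smooth_on U (partial d f)"
  unfolding smooth_on_def by (metis pd_append)

lemma smooth_on_differentiable: "smooth_on U f \<Longrightarrow> p \<in> U \<Longrightarrow> f differentiable (at p)"
  unfolding smooth_on_def by (metis pd.simps(1))

lemma pd_component:
  fixes f :: "complex \<Rightarrow> real^'n"
  assumes U: "open U" and f: "smooth_on U f" and q: "q \<in> U"
  shows "pd ds (\<lambda>q. f q $ k) q = pd ds f q $ k"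
  using q
proof (induction ds arbitrary: q)
  case Nil then show ?case by simp
next
  case (Cons d ds)
  have "pd (d # ds) (\<lambda>q. f q $ k) q = partial d (\<lambda>q. pd ds f q $ k) q"
    using partial_cong_open[OF U Cons.prems Cons.IH] by simp
  also have "\<dots> = pd (d # ds) f q $ k"
    using partial_nth(1)[of "pd ds f" q d k] f Cons.prems unfolding smooth_on_def by simp
  finally show ?case .
qed

lemma smooth_on_component:
  fixes f :: "complex \<Rightarrow> real^'n"
  assumes U: "open U" and f: "smooth_on U f"
  shows "smooth_on U (\<lambda>q. f q $ k)"
  unfolding smooth_on_def
proof (intro allI ballI)
  fix ds q assume q: "q \<in> U"
  have "(\<lambda>q. pd ds f q $ k) differentiable (at q)"
    using partial_nth(2) f q unfolding smooth_on_def by blast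
  then show "pd ds (\<lambda>q. f q $ k) differentiable (at q)"
    using differentiable_cong_open[OF U q, of "pd ds (\<lambda>q. f q $ k)" "\<lambda>q. pd ds f q $ k"]
      pd_component[OF U f] by blast
qed

section \<open>Symmetry of mixed partial derivatives\<close>

lemma line_DERIV:
  fixes f :: "complex \<Rightarrow> real"
  assumes "f differentiable (at (q + of_real s * dir d))"
  shows "((\<lambda>t. f (q + of_real t * dir d)) has_real_derivative partial d f (q + of_real s * dir d)) (at s)"
proof -
  let ?D = "frechet_derivative f (at (q + of_real s * dir d))"
  have "((\<lambda>t. q + of_real t * dir d) has_derivative (\<lambda>t. of_real t * dir d)) (at s)"
    by (auto intro!: derivative_eq_intros)
  from has_derivative_compose[OF this assms[THEN frechet_derivative_works[THEN iffD1]]]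
  have "((\<lambda>t. f (q + of_real t * dir d)) has_derivative (\<lambda>t. ?D (t *\<^sub>R dir d))) (at s)"
    by (simp add: o_def scaleR_conv_of_real)
  moreover have "linear ?D" using assms by (rule linear_frechet_derivative)
  then have "?D (t *\<^sub>R dir d) = ?D (dir d) * t" for t by (simp add: linear_scale)
  ultimately show ?thesis unfolding has_field_derivative_def partial_frechet by simp
qed

lemma mvt_line:
  fixes f :: "complex \<Rightarrow> real"
  assumes h: "h > 0"
    and df: "\<And>s. 0 \<le> s \<Longrightarrow> s \<le> h \<Longrightarrow> f differentiable (at (q + of_real s * dir d))"
  shows "\<exists>s. 0 < s \<and> s < h \<and> f (q + of_real h * dir d) - f q = h * partial d f (q + of_real s * dir d)"
proof -
  let ?g = "\<lambda>t. f (q + of_real t * dir d)"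
  have D: "(?g has_real_derivative partial d f (q + of_real s * dir d)) (at s)"
    if "0 \<le> s" "s \<le> h" for s
    using line_DERIV df that by blast
  have "continuous_on {0..h} ?g"
  proof (rule continuous_at_imp_continuous_on, intro ballI)
    fix x assume "x \<in> {0..h}"
    then show "isCont ?g x" using DERIV_isCont[OF D[of x]] by simp
  qed
  moreover have "\<forall>x. 0 < x \<and> x < h \<longrightarrow> ?g differentiable (at x)"
    using D real_differentiable_def by (meson less_imp_le)
  ultimately obtain l s where s: "0 < s" "s < h" "(?g has_real_derivative l) (at s)" "?g h - ?g 0 = (h - 0) * l"
    using MVT[OF h] by blast
  have "l = partial d f (q + of_real s * dir d)" using DERIV_unique[OF s(3) D] s by simp
  then show ?thesis using s by auto
qed

text \<open>The second difference of f over a coordinate square is h^2 times a mixed partial at an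
  interior point; applying it in both orders gives Schwarz's theorem.\<close>

lemma second_difference:
  fixes f :: "complex \<Rightarrow> real"
  assumes h: "h > 0"
    and df: "\<And>s t. 0 \<le> s \<Longrightarrow> s \<le> h \<Longrightarrow> 0 \<le> t \<Longrightarrow> t \<le> h \<Longrightarrow>
               f differentiable (at (p + of_real s * dir d + of_real t * dir e))"
    and ddf: "\<And>s t. 0 \<le> s \<Longrightarrow> s \<le> h \<Longrightarrow> 0 \<le> t \<Longrightarrow> t \<le> h \<Longrightarrow>
               partial d f differentiable (at (p + of_real s * dir d + of_real t * dir e))"
  shows "\<exists>s t. 0 < s \<and> s < h \<and> 0 < t \<and> t < h \<and>
     f (p + of_real h * dir d + of_real h * dir e) - f (p + of_real h * dir d) - f (p + of_real h * dir e) + f p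
       = h^2 * partial e (partial d f) (p + of_real s * dir d + of_real t * dir e)"
proof -
  define g where "g = (\<lambda>z. f (z + of_real h * dir e) - f z)"
  have g_diff: "g differentiable (at (p + of_real s * dir d))"
    and g_partial: "partial d g (p + of_real s * dir d)
      = partial d f (p + of_real s * dir d + of_real h * dir e) - partial d f (p + of_real s * dir d)"
    if "0 \<le> s" "s \<le> h" for s
  proof -
    have shifted: "f differentiable (at (p + of_real s * dir d + of_real h * dir e))"
      using df[of s h] that h by simp
    have base: "f differentiable (at (p + of_real s * dir d))" using df[of s 0] that h by simp
    show "g differentiable (at (p + of_real s * dir d))"
      unfolding g_def using partial_shift(2)[OF shifted] base by (intro differentiable_diff)
    show "partial d g (p + of_real s * dir d)
      = partial d f (p + of_real s * dir d + of_real h * dir e) - partial d f (p + of_real s * dir d)"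
      unfolding g_def using partial_diff[OF partial_shift(2)[OF shifted] base] partial_shift(1)[OF shifted]
      by simp
  qed
  obtain s where s: "0 < s" "s < h"
    "g (p + of_real h * dir d) - g p = h * partial d g (p + of_real s * dir d)"
    using mvt_line[OF h g_diff] by blast
  define q where "q = p + of_real s * dir d"
  obtain t where t: "0 < t" "t < h"
    "partial d f (q + of_real h * dir e) - partial d f q = h * partial e (partial d f) (q + of_real t * dir e)"
    using mvt_line[OF h, of "partial d f" q e] ddf s unfolding q_def by auto
  have "f (p + of_real h * dir d + of_real h * dir e) - f (p + of_real h * dir d) - f (p + of_real h * dir e) + f p
      = g (p + of_real h * dir d) - g p"
    by (simp add: g_def)
  also have "\<dots> = h^2 * partial e (partial d f) (q + of_real t * dir e)"
    using s(3) g_partial[of s] s t(3) by (simp add: q_def power2_eq_square)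
  finally show ?thesis using s t unfolding q_def by blast
qed

lemma norm_dir_combination: "norm (of_real s * dir d + of_real t * dir e) \<le> \<bar>s\<bar> + \<bar>t\<bar>"
  using norm_triangle_ineq[of "of_real s * dir d" "of_real t * dir e"]
  by (simp add: norm_mult dir_def)

text \<open>Schwarz's theorem for smooth real functions, by comparing the two second-difference
  representations near p.\<close>

lemma schwarz_real:
  fixes f :: "complex \<Rightarrow> real"
  assumes U: "open U" and f: "smooth_on U f" and p: "p \<in> U"
  shows "partial True (partial False f) p = partial False (partial True f) p"
proof (rule ccontr)
  let ?A = "partial True (partial False f)" and ?B = "partial False (partial True f)"
  let ?pt = "\<lambda>s t d e. p + of_real s * dir d + of_real t * dir e"
  assume ne: "?A p \<noteq> ?B p"
  define \<delta> where "\<delta> = \<bar>?A p - ?B p\<bar> / 2"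
  have \<delta>: "\<delta> > 0" using ne by (simp add: \<delta>_def)
  have "isCont ?A p" "isCont ?B p"
    using f p unfolding smooth_on_def
    by (metis differentiable_imp_continuous_within pd.simps)+
  then obtain rA rB where rA: "rA > 0" "\<And>x. dist x p < rA \<Longrightarrow> \<bar>?A x - ?A p\<bar> < \<delta>"
    and rB: "rB > 0" "\<And>x. dist x p < rB \<Longrightarrow> \<bar>?B x - ?B p\<bar> < \<delta>"
    using \<delta> unfolding continuous_at_eps_delta dist_real_def by metis
  obtain rU where rU: "rU > 0" "ball p rU \<subseteq> U" using U p open_contains_ball by blast
  define r where "r = min rU (min rA rB)"
  have r: "r > 0" "ball p r \<subseteq> U" using rA rB rU by (auto simp: r_def)
  define h where "h = r / 4"
  have h: "h > 0" using r by (simp add: h_def)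
  have near: "norm (?pt s t d e - p) < r" if "0 \<le> s" "s \<le> h" "0 \<le> t" "t \<le> h" for s t d e
    using norm_dir_combination[of s d t e] that r by (simp add: h_def add.assoc)
  have inU: "?pt s t d e \<in> U" if "0 \<le> s" "s \<le> h" "0 \<le> t" "t \<le> h" for s t d e
    using near[OF that] r(2) by (auto simp: dist_norm norm_minus_commute subset_iff)
  have diff: "pd ds f differentiable (at (?pt s t d e))" if "0 \<le> s" "s \<le> h" "0 \<le> t" "t \<le> h" for ds s t d e
    using f inU[OF that] unfolding smooth_on_def by blast
  obtain s1 t1 where st1: "0 < s1" "s1 < h" "0 < t1" "t1 < h"
    and eq1: "f (?pt h h False True) - f (?pt h 0 False True) - f (?pt 0 h False True) + f p
       = h^2 * ?A (?pt s1 t1 False True)"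
    using second_difference[OF h, of f p False True] diff[of _ _ "[]"] diff[of _ _ "[False]"] by auto
  obtain s2 t2 where st2: "0 < s2" "s2 < h" "0 < t2" "t2 < h"
    and eq2: "f (?pt h h True False) - f (?pt h 0 True False) - f (?pt 0 h True False) + f p
       = h^2 * ?B (?pt s2 t2 True False)"
    using second_difference[OF h, of f p True False] diff[of _ _ "[]"] diff[of _ _ "[True]"] by auto
  have "?A (?pt s1 t1 False True) = ?B (?pt s2 t2 True False)"
    using eq1 eq2 h by (simp add: algebra_simps)
  moreover have "\<bar>?A (?pt s1 t1 False True) - ?A p\<bar> < \<delta>"
    using rA(2) near[of s1 t1] st1 by (simp add: r_def dist_norm)
  moreover have "\<bar>?B (?pt s2 t2 True False) - ?B p\<bar> < \<delta>"
    using rB(2) near[of s2 t2] st2 by (simp add: r_def dist_norm)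
  ultimately show False unfolding \<delta>_def by (auto simp: abs_if split: if_splits)
qed

lemma schwarz:
  fixes f :: "complex \<Rightarrow> real^'n"
  assumes U: "open U" and f: "smooth_on U f" and p: "p \<in> U"
  shows "partial True (partial False f) p = partial False (partial True f) p"
proof (subst vec_eq_iff, intro allI)
  fix k
  have "partial True (partial False (\<lambda>q. f q $ k)) p = partial False (partial True (\<lambda>q. f q $ k)) p"
    by (rule schwarz_real[OF U smooth_on_component[OF U f] p])
  then show "partial True (partial False f) p $ k = partial False (partial True f) p $ k"
    using pd_component[OF U f p, of "[True, False]" k] pd_component[OF U f p, of "[False, True]" k] by simp
qed

lemma d_zbar_cong_open:
  assumes "open U" "p \<in> U" "\<And>q. q \<in> U \<Longrightarrow> F q = G q"
  shows "d_zbar F p = d_zbar G p"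
  using partial_cong_open[OF assms] by (simp add: d_zbar_def)

lemma d_zbar_add:
  assumes "F differentiable (at p)" "G differentiable (at p)"
  shows "d_zbar (\<lambda>q. F q + G q) p = d_zbar F p + d_zbar G p"
  using partial_add[OF assms] by (simp add: d_zbar_def algebra_simps add_divide_distrib)

lemma d_zbar_mult:
  fixes F G :: "complex \<Rightarrow> complex"
  assumes "F differentiable (at p)" "G differentiable (at p)"
  shows "d_zbar (\<lambda>q. F q * G q) p = d_zbar F p * G p + F p * d_zbar G p"
  using partial_mult(1)[OF assms] by (simp add: d_zbar_def algebra_simps add_divide_distrib)

lemma d_zbar_chain:
  fixes f :: "complex \<Rightarrow> real"
  assumes g: "(g has_real_derivative D) (at (f p))" and f: "f differentiable (at p)"
  shows "d_zbar (\<lambda>q. of_real (g (f q))) p = of_real D * d_zbar (\<lambda>q. of_real (f q)) p"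
proof -
  have "partial e (\<lambda>q. of_real (g (f q)) :: complex) p = of_real (D * partial e f p)" for e
    using partial_linear(1)[OF bounded_linear_of_real[where 'a=complex] partial_chain(2)[OF g f]] partial_chain(1)[OF g f]
    by simp
  moreover have "partial e (\<lambda>q. of_real (f q) :: complex) p = of_real (partial e f p)" for e
    using partial_linear(1)[OF bounded_linear_of_real[where 'a=complex] f] by simp
  ultimately show ?thesis by (simp add: d_zbar_def algebra_simps)
qed

lemma d_zbar_Complex:
  fixes R J :: "complex \<Rightarrow> real"
  assumes "R differentiable (at p)" "J differentiable (at p)"
  shows "d_zbar (\<lambda>q. Complex (R q) (J q)) p
    = Complex ((partial False R p - partial True J p) / 2) ((partial False J p + partial True R p) / 2)"
  using partial_Complex(1)[OF assms] by (simp add: d_zbar_def complex_eq_iff)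

section \<open>The ambient bilinear form and an adapted frame\<close>

lemma amb_bounded_bilinear: "bounded_bilinear (amb \<epsilon>)"
  unfolding bilinear_conv_bounded_bilinear[symmetric] bilinear_def amb_def
  by (auto intro!: linearI simp: algebra_simps)

lemma amb3_bounded_bilinear: "bounded_bilinear (amb3 \<epsilon>)"
  unfolding bilinear_conv_bounded_bilinear[symmetric] bilinear_def amb3_def
  by (auto intro!: linearI simp: algebra_simps)

lemmas partial_amb = partial_bilinear[OF amb_bounded_bilinear]

lemmas partial_amb3 = partial_bilinear[OF amb3_bounded_bilinear]

lemma amb_add_left: "amb \<epsilon> (u + v) w = amb \<epsilon> u w + amb \<epsilon> v w"
  by (simp add: amb_def algebra_simps)

lemma amb_sym: "amb \<epsilon> u v = amb \<epsilon> v u"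
  by (simp add: amb_def algebra_simps)

lemma amb3_sym: "amb3 \<epsilon> u v = amb3 \<epsilon> v u"
  by (simp add: amb3_def algebra_simps)

lemma amb3_amb: "amb3 \<epsilon> u v = amb \<epsilon> u v - u$4 * v$4"
  by (simp add: amb_def amb3_def)

definition pbar :: "real^4 \<Rightarrow> real^4" where
  "pbar v = (\<chi> i. if i = 4 then 0 else v $ i)"

definition e4 :: "real^4" where
  "e4 = (\<chi> i. if i = 4 then 1 else 0)"

lemma amb_pbar: "amb \<epsilon> (pbar v) w = amb3 \<epsilon> v w" "amb \<epsilon> w (pbar v) = amb3 \<epsilon> w v"
  by (simp_all add: pbar_def amb_def amb3_def)

lemma amb3_pbar: "amb3 \<epsilon> w (pbar v) = amb3 \<epsilon> w v"
  by (simp add: amb3_def pbar_def)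

lemma amb_e4: "amb \<epsilon> e4 w = w $ 4" "amb \<epsilon> w e4 = w $ 4"
  by (simp_all add: e4_def amb_def)

lemma frame_spans:
  fixes v1 v2 v3 v4 w :: "real^4"
  assumes eps: "\<epsilon> \<noteq> 0"
   and g: "amb \<epsilon> v1 v1 = a" "amb \<epsilon> v1 v2 = b" "amb \<epsilon> v2 v2 = c" "a*c - b^2 \<noteq> 0"
     "amb \<epsilon> v1 v3 = 0" "amb \<epsilon> v2 v3 = 0" "amb \<epsilon> v3 v3 = 1" "amb \<epsilon> v1 v4 = 0" "amb \<epsilon> v2 v4 = 0"
     "amb \<epsilon> v3 v4 = 0" "amb \<epsilon> v4 v4 = \<epsilon>"
  shows "\<exists>x1 x2 x3 x4. w = x1 *\<^sub>R v1 + x2 *\<^sub>R v2 + x3 *\<^sub>R v3 + x4 *\<^sub>R v4"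
proof -
  define \<Phi> where "\<Phi> = (\<lambda>x::real^4. x$1 *\<^sub>R v1 + x$2 *\<^sub>R v2 + x$3 *\<^sub>R v3 + x$4 *\<^sub>R v4)"
  have lin: "linear \<Phi>" unfolding \<Phi>_def by (auto intro!: linearI simp: algebra_simps)
  have inj: "inj \<Phi>"
  proof (subst linear_inj_iff_eq_0[OF lin], intro allI impI)
    fix x assume x0: "\<Phi> x = 0"
    have "amb \<epsilon> (\<Phi> x) y = x$1 * amb \<epsilon> v1 y + x$2 * amb \<epsilon> v2 y + x$3 * amb \<epsilon> v3 y + x$4 * amb \<epsilon> v4 y" for y
      unfolding \<Phi>_def amb_def by (simp add: algebra_simps)
    then have pair: "x$1 * amb \<epsilon> v1 y + x$2 * amb \<epsilon> v2 y + x$3 * amb \<epsilon> v3 y + x$4 * amb \<epsilon> v4 y = 0" for y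
      using x0 by (simp add: amb_def)
    have 1: "x$1 * a + x$2 * b = 0" and 2: "x$1 * b + x$2 * c = 0" and 3: "x$3 = 0" and 4: "x$4 * \<epsilon> = 0"
      using pair[of v1] pair[of v2] pair[of v3] pair[of v4] g by (simp_all add: amb_sym)
    have "x$1 * (a*c - b^2) = c*(x$1 * a + x$2 * b) - b*(x$1 * b + x$2 * c)"
      by (simp add: power2_eq_square algebra_simps)
    then have x1: "x$1 = 0" using 1 2 g(4) by simp
    have "x$2 * (a*c - b^2) = a*(x$1 * b + x$2 * c) - b*(x$1 * a + x$2 * b)"
      by (simp add: power2_eq_square algebra_simps)
    then have x2: "x$2 = 0" using 1 2 g(4) by simp
    then show "x = 0" using x1 x2 3 4 eps by (simp add: vec_eq_iff forall_4)
  qed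
  then have "surj \<Phi>" using linear_injective_imp_surjective[OF lin] by simp
  then obtain x where "w = \<Phi> x" by (metis surjD)
  then show ?thesis unfolding \<Phi>_def by blast
qed

lemma frame_expansion:
  fixes v1 v2 v3 v4 w u :: "real^4"
  assumes eps: "\<epsilon> = 1 \<or> \<epsilon> = -1"
   and g: "amb \<epsilon> v1 v1 = a" "amb \<epsilon> v1 v2 = b" "amb \<epsilon> v2 v2 = c" "a*c - b^2 \<noteq> 0"
     "amb \<epsilon> v1 v3 = 0" "amb \<epsilon> v2 v3 = 0" "amb \<epsilon> v3 v3 = 1" "amb \<epsilon> v1 v4 = 0" "amb \<epsilon> v2 v4 = 0"
     "amb \<epsilon> v3 v4 = 0" "amb \<epsilon> v4 v4 = \<epsilon>"
  shows "amb \<epsilon> w u = (c * amb \<epsilon> w v1 * amb \<epsilon> u v1 - b * (amb \<epsilon> w v1 * amb \<epsilon> u v2 + amb \<epsilon> w v2 * amb \<epsilon> u v1)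
            + a * amb \<epsilon> w v2 * amb \<epsilon> u v2) / (a*c - b^2) + amb \<epsilon> w v3 * amb \<epsilon> u v3 + \<epsilon> * amb \<epsilon> w v4 * amb \<epsilon> u v4"
proof -
  obtain x1 x2 x3 x4 where w: "w = x1 *\<^sub>R v1 + x2 *\<^sub>R v2 + x3 *\<^sub>R v3 + x4 *\<^sub>R v4"
    using frame_spans[OF _ g] eps by fastforce
  have pair: "amb \<epsilon> w y = x1 * amb \<epsilon> v1 y + x2 * amb \<epsilon> v2 y + x3 * amb \<epsilon> v3 y + x4 * amb \<epsilon> v4 y" for y
    unfolding w by (simp add: amb_def algebra_simps)
  have sym: "amb \<epsilon> v2 v1 = b" "amb \<epsilon> v3 v1 = 0" "amb \<epsilon> v3 v2 = 0" "amb \<epsilon> v4 v1 = 0"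
    "amb \<epsilon> v4 v2 = 0" "amb \<epsilon> v4 v3 = 0"
    using g by (simp_all add: amb_sym)
  have w1: "amb \<epsilon> w v1 = x1 * a + x2 * b" and w2: "amb \<epsilon> w v2 = x1 * b + x2 * c"
    and w3: "amb \<epsilon> w v3 = x3" and w4: "amb \<epsilon> w v4 = x4 * \<epsilon>"
    using pair[of v1] pair[of v2] pair[of v3] pair[of v4] g sym by simp_all
  have wu: "amb \<epsilon> w u = x1 * amb \<epsilon> u v1 + x2 * amb \<epsilon> u v2 + x3 * amb \<epsilon> u v3 + x4 * amb \<epsilon> u v4"
    using pair[of u] by (simp add: amb_sym[of \<epsilon> _ u])
  have gram: "c * (x1 * a + x2 * b) * U1 - b * ((x1 * a + x2 * b) * U2 + (x1 * b + x2 * c) * U1)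
            + a * (x1 * b + x2 * c) * U2 = (a*c - b^2) * (x1 * U1 + x2 * U2)" for U1 U2
    by (simp add: power2_eq_square algebra_simps)
  have eps_sq: "\<epsilon> * (x4 * \<epsilon>) * amb \<epsilon> u v4 = x4 * amb \<epsilon> u v4" using eps by auto
  show ?thesis unfolding w1 w2 w3 w4 gram eps_sq using g(4) wu by simp
qed

section \<open>The functions g and chi\<close>

text \<open>g(nu) = (eps/K) Gf((eps/K)(1-nu^2)) for the entire function Gf(t) = (e^t - 1 - t)/t^2; this
  gives differentiability of g at nu^2 = 1 as well.\<close>

definition Gf :: "real \<Rightarrow> real" where
  "Gf t = (if t = 0 then 1/2 else (exp t - 1 - t) / t^2)"

lemma Gf_has_derivative:
  "\<exists>D. (Gf has_real_derivative D) (at t) \<and> (t \<noteq> 0 \<longrightarrow> D = ((exp t - 1) * t - 2 * (exp t - 1 - t)) / t^3)"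
proof (cases "t = 0")
  case True
  have "((\<lambda>y. ((exp y - 1 - y) / y^2 - 1/2) / y) \<longlongrightarrow> 1/6) (at (0::real))"
    by real_asymp
  then have "((\<lambda>y. (Gf y - Gf 0) / (y - 0)) \<longlongrightarrow> 1/6) (at 0)"
    by (rule Lim_transform_eventually) (auto simp: eventually_at_filter Gf_def)
  then show ?thesis using True by (auto simp: has_field_derivative_iff)
next
  case False
  have "((\<lambda>y. (exp y - 1 - y) / y^2) has_real_derivative ((exp t - 1) * t - 2 * (exp t - 1 - t)) / t^3) (at t)"
    using False by (auto intro!: derivative_eq_intros simp: field_simps power2_eq_square power3_eq_cube)
  then have "(Gf has_real_derivative ((exp t - 1) * t - 2 * (exp t - 1 - t)) / t^3) (at t)"
  proof (rule has_field_derivative_transform_within_open[where S = "-{0}"])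
    show "open (-{0::real})" by (simp add: open_Compl)
  qed (use False in \<open>auto simp: Gf_def\<close>)
  then show ?thesis by blast
qed

lemma gfun_Gf:
  assumes eps: "\<epsilon> = 1 \<or> \<epsilon> = -1" and K: "K > 0"
  shows "gfun \<epsilon> K \<nu> = (\<epsilon>/K) * Gf ((\<epsilon>/K) * (1 - \<nu>^2))"
proof (cases "\<nu>^2 = 1")
  case True then show ?thesis by (simp add: gfun_def Gf_def)
next
  case False
  define a where "a = \<epsilon>/K"
  define s where "s = 1 - \<nu>^2"
  have a0: "a \<noteq> 0" and s0: "s \<noteq> 0" using eps K False by (auto simp: a_def s_def)
  have eK: "\<epsilon> * K = 1/a" using eps K by (auto simp: a_def)
  have "gfun \<epsilon> K \<nu> = (- s + (1 / a) * (exp (a * s) - 1)) / s^2"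
    using False unfolding gfun_def eK by (simp add: a_def s_def)
  also have "\<dots> = a * ((exp (a * s) - 1 - a * s) / (a * s)^2)"
    using a0 s0 by (simp add: field_simps power2_eq_square)
  finally show ?thesis using a0 s0 by (simp add: Gf_def a_def s_def)
qed

lemma chi_gfun:
  "chi \<epsilon> K \<nu> = 1 + gfun \<epsilon> K \<nu> * (1 - \<nu>^2)"
proof (cases "\<nu>^2 = 1")
  case True then show ?thesis by (simp add: chi_def gfun_def)
next
  case False
  define s where "s = 1 - \<nu>^2"
  define E where "E = exp (\<epsilon> * s / K)"
  have "s \<noteq> 0" using False by (simp add: s_def)
  then have "\<epsilon> * K * (E - 1) / s = 1 + ((- s + \<epsilon> * K * (E - 1)) / s^2) * s"
    by (simp add: field_simps power2_eq_square)
  then show ?thesis using False by (simp add: chi_def gfun_def s_def E_def)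
qed

lemma chi_pos:
  assumes eps: "\<epsilon> = 1 \<or> \<epsilon> = -1" and K: "K > 0"
  shows "chi \<epsilon> K \<nu> > 0"
proof (cases "\<nu>^2 = 1")
  case True then show ?thesis by (simp add: chi_def)
next
  case False
  define s where "s = 1 - \<nu>^2"
  have s0: "s \<noteq> 0" using False by (simp add: s_def)
  have "\<epsilon> * (exp (\<epsilon> * s / K) - 1) * s > 0"
  proof -
    have "(exp (\<epsilon> * s / K) - 1) * (\<epsilon> * s) > 0"
    proof (cases "\<epsilon> * s > 0")
      case True then show ?thesis using K by (simp add: zero_less_mult_iff)
    next
      case False
      then have "\<epsilon> * s < 0" using eps s0 by auto
      then show ?thesis using K by (simp add: zero_less_mult_iff divide_neg_pos)
    qed
    then show ?thesis by (simp add: algebra_simps)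
  qed
  then have "\<epsilon> * K * (exp (\<epsilon> * s / K) - 1) / s > 0"
    using K s0 by (simp add: zero_less_divide_iff zero_less_mult_iff mult_less_0_iff)
  then show ?thesis using False by (simp add: chi_def s_def)
qed

lemma gfun_deriv:
  assumes eps: "\<epsilon> = 1 \<or> \<epsilon> = -1" and K: "K > 0"
  shows "(gfun \<epsilon> K has_real_derivative deriv (gfun \<epsilon> K) \<nu>) (at \<nu>)"
    and "deriv (gfun \<epsilon> K) \<nu> * (1 - \<nu>^2) / 2 = \<nu> * (2 * gfun \<epsilon> K \<nu> - \<epsilon> * chi \<epsilon> K \<nu> / K)"
proof -
  define a where "a = \<epsilon>/K"
  have a0: "a \<noteq> 0" using eps K by (auto simp: a_def)
  define t where "t = a * (1 - \<nu>^2)"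
  obtain DG where DG: "(Gf has_real_derivative DG) (at t)"
    "t \<noteq> 0 \<longrightarrow> DG = ((exp t - 1) * t - 2 * (exp t - 1 - t)) / t^3" using Gf_has_derivative by blast
  have geq: "gfun \<epsilon> K = (\<lambda>\<nu>. a * Gf (a * (1 - \<nu>^2)))" using gfun_Gf[OF eps K] by (auto simp: a_def)
  have "((\<lambda>\<nu>. a * (1 - \<nu>^2)) has_real_derivative a * (- 2 * \<nu>)) (at \<nu>)"
    by (auto intro!: derivative_eq_intros)
  from DERIV_cmult[OF DERIV_chain2[OF DG(1)[unfolded t_def] this]]
  have D: "(gfun \<epsilon> K has_real_derivative a * (DG * (a * (- 2 * \<nu>)))) (at \<nu>)" unfolding geq .
  then show "(gfun \<epsilon> K has_real_derivative deriv (gfun \<epsilon> K) \<nu>) (at \<nu>)"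
    using DERIV_imp_deriv by fastforce
  have g: "gfun \<epsilon> K \<nu> = a * Gf t" using geq by (simp add: t_def)
  have "a * (DG * (a * (- 2 * \<nu>))) * (1 - \<nu>^2) / 2 = \<nu> * (2 * gfun \<epsilon> K \<nu> - \<epsilon> * chi \<epsilon> K \<nu> / K)"
  proof (cases "t = 0")
    case True
    then have "1 - \<nu>^2 = 0" using a0 by (simp add: t_def)
    then show ?thesis unfolding chi_gfun g using True by (simp add: Gf_def a_def)
  next
    case False
    have s: "1 - \<nu>^2 = t / a" using a0 by (simp add: t_def)
    have chi: "\<epsilon> * chi \<epsilon> K \<nu> / K = a * (1 + Gf t * t)"
      unfolding chi_gfun g s using a0 by (simp add: a_def)
    have "a * (((E - 1) * t - 2 * (E - 1 - t)) / t^3 * (a * (- 2 * \<nu>))) * (t / a) / 2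
       = \<nu> * (2 * (a * ((E - 1 - t) / t^2)) - a * (1 + ((E - 1 - t) / t^2) * t))" for E
      using False a0 by (simp add: field_simps power2_eq_square power3_eq_cube)
    then show ?thesis unfolding g chi s using DG(2) False by (simp add: Gf_def)
  qed
  then show "deriv (gfun \<epsilon> K) \<nu> * (1 - \<nu>^2) / 2 = \<nu> * (2 * gfun \<epsilon> K \<nu> - \<epsilon> * chi \<epsilon> K \<nu> / K)"
    using DERIV_imp_deriv[OF D] by simp
qed

section \<open>Pointwise algebra\<close>

text \<open>For A = [[p, r], [r, t]] and v = (x, y): 4 (v^T adj(A) v)^2 ((p-t)^2 + 4 r^2) - 16 det(A)
  (adj(A)v x v)^2 is a square.\<close>

lemma adjugate_square_identity:
  fixes p r t x y :: real
  shows "4 * (x*(t*x - r*y) + y*(p*y - r*x))^2 * ((p-t)^2 + 4*r^2) - 16 * (p*t - r^2) * ((t*x - r*y)*y - (p*y - r*x)*x)^2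
       = ((p+t) * ((p-t)*(x^2-y^2) + 4*r*x*y) - ((p-t)^2 + 4*r^2) * (x^2+y^2))^2"
  by algebra

text \<open>Solving the differentiated Gauss equation together with the Codazzi equations for the
  tangential components of the Laplacian of psi.\<close>

lemma codazzi_algebra:
  fixes a b c lam K eps nu h1 h2 G111 G112 G121 G122 G221 G222 lamx lamy :: real
  assumes Dt: "a*c - b^2 \<noteq> 0" and lam: "lam \<noteq> 0" and gauss: "lam^2 = K * (a*c - b^2)"
   and gauss_x: "lam * lamx = K * (c*G111 + a*G122 - b*(G112 + G121))"
   and gauss_y: "lam * lamy = K * (c*G121 + a*G222 - b*(G122 + G221))"
   and codazzi_x: "(a*c - b^2) * lamx
       = - lam * (c*G221 - b*G222 + b*G121 - a*G122) - (a*c - b^2)*eps*nu*(c*h1 - b*h2)"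
   and codazzi_y: "(a*c - b^2) * lamy
       = - lam * (a*G112 - b*G111 - c*G121 + b*G122) - (a*c - b^2)*eps*nu*(a*h2 - b*h1)"
  shows "lam * (G111 + G221) = - eps*nu*h1*(a*c - b^2)"
    and "lam * (G112 + G222) = - eps*nu*h2*(a*c - b^2)"
proof -
  define Dt where "Dt = a*c - b^2"
  have Dt0: "Dt \<noteq> 0" using Dt by (simp add: Dt_def)
  have "lam * (Dt * lamx) = Dt * (lam * lamx)" by (simp add: algebra_simps)
  also have "\<dots> = (K * Dt) * (c*G111 + a*G122 - b*(G112 + G121))"
    unfolding gauss_x by (simp add: algebra_simps)
  also have "\<dots> = lam * (lam * (c*G111 + a*G122 - b*(G112 + G121)))"
    using gauss unfolding Dt_def[symmetric] by (simp add: power2_eq_square)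
  finally have "Dt * lamx = lam * (c*G111 + a*G122 - b*(G112 + G121))" using lam by simp
  then have eq_x: "lam * (c*(G111 + G221) - b*(G112 + G222)) = - Dt*eps*nu*(c*h1 - b*h2)"
    using codazzi_x unfolding Dt_def[symmetric] by (simp add: algebra_simps)
  have "lam * (Dt * lamy) = Dt * (lam * lamy)" by (simp add: algebra_simps)
  also have "\<dots> = (K * Dt) * (c*G121 + a*G222 - b*(G122 + G221))"
    unfolding gauss_y by (simp add: algebra_simps)
  also have "\<dots> = lam * (lam * (c*G121 + a*G222 - b*(G122 + G221)))"
    using gauss unfolding Dt_def[symmetric] by (simp add: power2_eq_square)
  finally have "Dt * lamy = lam * (c*G121 + a*G222 - b*(G122 + G221))" using lam by simp
  then have eq_y: "lam * (a*(G112 + G222) - b*(G111 + G221)) = - Dt*eps*nu*(a*h2 - b*h1)"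
    using codazzi_y unfolding Dt_def[symmetric] by (simp add: algebra_simps)
  have "Dt * (lam * (G111 + G221)) = a * (lam * (c*(G111 + G221) - b*(G112 + G222)))
      + b * (lam * (a*(G112 + G222) - b*(G111 + G221)))"
    by (simp add: Dt_def power2_eq_square algebra_simps)
  also have "\<dots> = Dt * (- eps*nu*h1*Dt)"
    unfolding eq_x eq_y by (simp add: Dt_def power2_eq_square algebra_simps)
  finally have "lam * (G111 + G221) = - eps*nu*h1*Dt" by (rule mult_left_cancel[THEN iffD1, OF Dt0])
  then show "lam * (G111 + G221) = - eps*nu*h1*(a*c - b^2)" by (simp add: Dt_def)
  have "Dt * (lam * (G112 + G222)) = c * (lam * (a*(G112 + G222) - b*(G111 + G221)))
      + b * (lam * (c*(G111 + G221) - b*(G112 + G222)))"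
    by (simp add: Dt_def power2_eq_square algebra_simps)
  also have "\<dots> = Dt * (- eps*nu*h2*Dt)"
    unfolding eq_x eq_y by (simp add: Dt_def power2_eq_square algebra_simps)
  finally have "lam * (G112 + G222) = - eps*nu*h2*Dt" by (rule mult_left_cancel[THEN iffD1, OF Dt0])
  then show "lam * (G112 + G222) = - eps*nu*h2*(a*c - b^2)" by (simp add: Dt_def)
qed

text \<open>The Codazzi and Gauss data rewritten with m = -eps nu lam/K; the last identity is where the
  ODE for g enters.\<close>

lemma codazzi_normal_form:
  fixes a b c lam K eps nu h1 h2 g D chi L1 L2 S :: real
  assumes Dt: "a*c - b^2 > 0" and gauss: "lam^2 = K * (a*c - b^2)" and lam: "lam \<noteq> 0"
   and normal_height: "(1 - nu^2)*(a*c - b^2) = c*h1^2 - 2*b*h1*h2 + a*h2^2"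
   and ode: "D*(1 - nu^2)/2 = nu*(2*g - eps*chi/K)"
   and L1: "lam*L1 = - eps*nu*h1*(a*c - b^2)" and L2: "lam*L2 = - eps*nu*h2*(a*c - b^2)"
   and S: "S*(a*c - b^2) = c*L1*h1 - b*(L1*h2 + L2*h1) + a*L2*h2 + 2*lam*nu*(a*c - b^2)"
  defines "m \<equiv> - eps*nu*lam/K"
  shows "L1 = m*h1" and "L2 = m*h2" and "S = m*(1 - nu^2) + 2*lam*nu"
    and "m*chi + 2*g*lam*nu = lam*D*(1 - nu^2)/2"
proof -
  define Dt where "Dt = a*c - b^2"
  have Dt0: "Dt \<noteq> 0" using Dt by (simp add: Dt_def)
  have K0: "K \<noteq> 0" using gauss lam by auto
  have "lam * L1 = lam * (m*h1)" "lam * L2 = lam * (m*h2)"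
    using L1 L2 gauss K0 unfolding Dt_def[symmetric] by (simp_all add: m_def field_simps power2_eq_square)
  then show L_m: "L1 = m*h1" "L2 = m*h2" using lam by simp_all
  have "S*Dt = m*(c*h1^2 - 2*b*h1*h2 + a*h2^2) + 2*lam*nu*Dt"
    using S unfolding Dt_def[symmetric] L_m by (simp add: power2_eq_square algebra_simps)
  also have "\<dots> = Dt * (m*(1 - nu^2) + 2*lam*nu)"
    unfolding normal_height[symmetric] Dt_def by (simp add: algebra_simps)
  finally show "S = m*(1 - nu^2) + 2*lam*nu" using Dt0 by simp
  have "lam*D*(1 - nu^2)/2 = lam*(nu*(2*g - eps*chi/K))" using ode by simp
  then show "m*chi + 2*g*lam*nu = lam*D*(1 - nu^2)/2" using K0 by (simp add: m_def field_simps)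
qed

text \<open>Real and imaginary part of 2 Q_zbar both factor through C.\<close>

lemma qzbar_factorization:
  fixes a b c lam m nu h1 h2 g D chi L1 L2 S nu1 nu2 :: real
  assumes Dt: "a*c - b^2 > 0"
   and normal_height: "(1 - nu^2)*(a*c - b^2) = c*h1^2 - 2*b*h1*h2 + a*h2^2"
   and L1: "L1 = m*h1" and L2: "L2 = m*h2" and S: "S = m*(1 - nu^2) + 2*lam*nu"
   and key: "m*chi + 2*g*lam*nu = lam*D*(1 - nu^2)/2" and chi: "chi = 1 + g*(1 - nu^2)"
   and nu1: "nu1*(a*c - b^2) = - lam*(c*h1 - b*h2)" and nu2: "nu2*(a*c - b^2) = - lam*(a*h2 - b*h1)"
  defines "C \<equiv> (c*h1 - b*h2)*h2 - (a*h2 - b*h1)*h1"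
  shows "L1/2 + D*(nu1*(h1^2 - h2^2)/4 + nu2*h1*h2/2) + g*h1*S/2 = lam*D*h2*C / (4*(a*c - b^2))"
    and "- L2/2 + D*(nu2*(h1^2 - h2^2)/4 - nu1*h1*h2/2) - g*h2*S/2 = lam*D*h1*C / (4*(a*c - b^2))"
proof -
  define Dt where "Dt = a*c - b^2"
  define s where "s = 1 - nu^2"
  define U1 where "U1 = c*h1 - b*h2"
  define U2 where "U2 = a*h2 - b*h1"
  have Dt0: "Dt \<noteq> 0" using Dt by (simp add: Dt_def)
  have sD: "s*Dt = h1*U1 + h2*U2"
    using normal_height by (simp add: s_def Dt_def U1_def U2_def power2_eq_square algebra_simps)
  have nu_U: "nu1 = - lam*U1/Dt" "nu2 = - lam*U2/Dt"
    using nu1 nu2 Dt0 by (simp_all add: U1_def U2_def Dt_def field_simps)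
  have C_U: "C = U1*h2 - U2*h1" by (simp add: C_def U1_def U2_def)
  have key_s: "m*chi + 2*g*lam*nu = lam*D* s/2" and S_s: "S = m* s + 2*lam*nu" and chi_s: "chi = 1 + g* s"
    using key S chi by (simp_all add: s_def)
  have "L1/2 + D*(nu1*(h1^2 - h2^2)/4 + nu2*h1*h2/2) + g*h1*S/2
      = h1*(m*chi + 2*g*lam*nu)/2 + D*(nu1*(h1^2 - h2^2)/4 + nu2*h1*h2/2)"
    unfolding L1 S_s chi_s by (simp add: algebra_simps)
  also have "\<dots> = lam*D*(h1*(s*Dt) - U1*(h1^2 - h2^2) - 2*U2*h1*h2)/(4*Dt)"
    unfolding key_s nu_U using Dt0 by (simp add: field_simps)
  also have "\<dots> = lam*D*h2*C/(4*Dt)" unfolding sD C_U by (simp add: power2_eq_square algebra_simps)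
  finally show "L1/2 + D*(nu1*(h1^2 - h2^2)/4 + nu2*h1*h2/2) + g*h1*S/2 = lam*D*h2*C / (4*(a*c - b^2))"
    by (simp add: Dt_def)
  have "- L2/2 + D*(nu2*(h1^2 - h2^2)/4 - nu1*h1*h2/2) - g*h2*S/2
      = - (h2*(m*chi + 2*g*lam*nu)/2) + D*(nu2*(h1^2 - h2^2)/4 - nu1*h1*h2/2)"
    unfolding L2 S_s chi_s by (simp add: field_simps)
  also have "\<dots> = lam*D*(- h2*(s*Dt) - U2*(h1^2 - h2^2) + 2*U1*h1*h2)/(4*Dt)"
    unfolding key_s nu_U using Dt0 by (simp add: field_simps)
  also have "\<dots> = lam*D*h1*C/(4*Dt)" unfolding sD C_U by (simp add: power2_eq_square algebra_simps)
  finally show "- L2/2 + D*(nu2*(h1^2 - h2^2)/4 - nu1*h1*h2/2) - g*h2*S/2 = lam*D*h1*C / (4*(a*c - b^2))"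
    by (simp add: Dt_def)
qed

text \<open>The key inequality chi C^2 <= 4 Dt (1-nu^2)^2 |Q|^2, from adjugate_square_identity applied to
  the matrix of the form A = I + g dh^2 (whose determinant is Dt chi) and v = (h1, h2).\<close>

lemma discriminant_bound:
  fixes a b c g chi nu h1 h2 :: real
  assumes Dt: "a*c - b^2 > 0" and chi: "chi = 1 + g*(1 - nu^2)"
   and normal_height: "(1 - nu^2)*(a*c - b^2) = c*h1^2 - 2*b*h1*h2 + a*h2^2"
  shows "chi * ((c*h1 - b*h2)*h2 - (a*h2 - b*h1)*h1)^2
       \<le> 4*(a*c - b^2)*(1 - nu^2)^2 * (((a - c)/4 + g*(h1^2 - h2^2)/4)^2 + (- b/2 - g*h1*h2/2)^2)"
proof -
  define Dt where "Dt = a*c - b^2"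
  define s where "s = 1 - nu^2"
  define p where "p = a + g*h1^2"
  define r where "r = b + g*h1*h2"
  define t where "t = c + g*h2^2"
  define Q2 where "Q2 = ((a - c)/4 + g*(h1^2 - h2^2)/4)^2 + (- b/2 - g*h1*h2/2)^2"
  have sD: "s*Dt = c*h1^2 - 2*b*h1*h2 + a*h2^2" using normal_height by (simp add: s_def Dt_def)
  have adj: "h1*(t*h1 - r*h2) + h2*(p*h2 - r*h1) = s*Dt"
    unfolding sD by (simp add: p_def r_def t_def power2_eq_square algebra_simps)
  have cross: "(t*h1 - r*h2)*h2 - (p*h2 - r*h1)*h1 = (c*h1 - b*h2)*h2 - (a*h2 - b*h1)*h1"
    by (simp add: p_def r_def t_def power2_eq_square algebra_simps)
  have det: "p*t - r^2 = Dt*chi"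
  proof -
    have "p*t - r^2 = Dt + g*(c*h1^2 - 2*b*h1*h2 + a*h2^2)"
      by (simp add: p_def t_def r_def Dt_def power2_eq_square algebra_simps)
    then show ?thesis unfolding sD[symmetric] chi s_def[symmetric] by (simp add: algebra_simps)
  qed
  have trace: "(p - t)^2 + 4*r^2 = 16*Q2"
    unfolding Q2_def p_def t_def r_def by (simp add: power2_eq_square field_simps)
  have "4*(s*Dt)^2*(16*Q2) - 16*(Dt*chi)*((c*h1 - b*h2)*h2 - (a*h2 - b*h1)*h1)^2 \<ge> 0"
    using adjugate_square_identity[of h1 t r h2 p] unfolding adj cross det trace
    by (metis zero_le_power2)
  then have "16*Dt*(4*Dt* s^2*Q2 - chi*((c*h1 - b*h2)*h2 - (a*h2 - b*h1)*h1)^2) \<ge> 0"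
    by (simp add: power2_eq_square algebra_simps)
  then show ?thesis using Dt by (simp add: Dt_def s_def Q2_def zero_le_mult_iff)
qed

lemma factorized_estimate:
  fixes Dt lam K chi D h1 h2 C s Q2 :: real
  assumes Dt: "Dt > 0" and gauss: "lam^2 = K * Dt" and K: "K > 0" and chi: "chi > 0"
   and bound: "chi * C^2 \<le> 4 * Dt * s^2 * Q2"
  shows "((lam*D*h2*C/(4*Dt))/2)^2 + ((lam*D*h1*C/(4*Dt))/2)^2
       \<le> K * D^2 * s^2 * ((h1/2)^2 + (h2/2)^2) / (4*chi) * Q2"
proof -
  define W where "W = D^2 * (h1^2 + h2^2)"
  have W: "W \<ge> 0" by (simp add: W_def)
  have "((lam*D*h2*C/(4*Dt))/2)^2 + ((lam*D*h1*C/(4*Dt))/2)^2 = lam^2 * W * C^2 / (64 * Dt^2)"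
    using Dt by (simp add: W_def field_simps power2_eq_square)
  also have "\<dots> = K * W * (C^2 / (64 * Dt))"
    unfolding gauss using Dt by (simp add: field_simps power2_eq_square)
  also have "\<dots> \<le> K * W * (s^2 * Q2 / (16 * chi))"
  proof (rule mult_left_mono)
    show "C^2 / (64 * Dt) \<le> s^2 * Q2 / (16 * chi)"
      using bound Dt chi by (simp add: divide_simps) (simp add: algebra_simps)
  qed (use K W in simp)
  also have "\<dots> = K * D^2 * s^2 * ((h1/2)^2 + (h2/2)^2) / (4*chi) * Q2"
    using chi by (simp add: W_def field_simps power2_eq_square)
  finally show ?thesis .
qed

section \<open>Surfaces of constant extrinsic curvature in M2(eps) x R\<close>

locale cek_surface =
  fixes \<epsilon> K :: real and U :: "complex set" and \<psi> N :: "complex \<Rightarrow> real^4"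
  assumes eps: "\<epsilon> = 1 \<or> \<epsilon> = -1"
    and Kpos: "K > 0"
    and U: "open U"
    and smooth_\<psi>: "smooth_on U \<psi>" and smooth_N: "smooth_on U N"
    and inM: "\<forall>q\<in>U. in_M2R \<epsilon> (\<psi> q)"
    and normal: "\<forall>q\<in>U. amb \<epsilon> (N q) (N q) = 1 \<and> amb3 \<epsilon> (N q) (\<psi> q) = 0
                    \<and> amb \<epsilon> (N q) (partial False \<psi> q) = 0 \<and> amb \<epsilon> (N q) (partial True \<psi> q) = 0"
    and conformalII: "\<forall>q\<in>U. fundII \<epsilon> \<psi> N False False q = fundII \<epsilon> \<psi> N True True q
                    \<and> fundII \<epsilon> \<psi> N False True q = 0 \<and> fundII \<epsilon> \<psi> N False False q > 0"
    and curvature: "\<forall>q\<in>U. (fundII \<epsilon> \<psi> N False False q * fundII \<epsilon> \<psi> N True True q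
                              - (fundII \<epsilon> \<psi> N False True q)^2)
                          / (fundI \<epsilon> \<psi> False False q * fundI \<epsilon> \<psi> True True q
                              - (fundI \<epsilon> \<psi> False True q)^2) = K"
begin

abbreviation X :: "complex \<Rightarrow> real^4" where "X \<equiv> partial False \<psi>"
abbreviation Y :: "complex \<Rightarrow> real^4" where "Y \<equiv> partial True \<psi>"
abbreviation I11 :: "complex \<Rightarrow> real" where "I11 \<equiv> fundI \<epsilon> \<psi> False False"
abbreviation I12 :: "complex \<Rightarrow> real" where "I12 \<equiv> fundI \<epsilon> \<psi> False True"
abbreviation I22 :: "complex \<Rightarrow> real" where "I22 \<equiv> fundI \<epsilon> \<psi> True True"
abbreviation Dt :: "complex \<Rightarrow> real" where "Dt q \<equiv> I11 q * I22 q - (I12 q)^2"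
abbreviation lam :: "complex \<Rightarrow> real" where "lam \<equiv> fundII \<epsilon> \<psi> N False False"
abbreviation Xx :: "complex \<Rightarrow> real^4" where "Xx \<equiv> partial False X"
abbreviation Xy :: "complex \<Rightarrow> real^4" where "Xy \<equiv> partial True X"
abbreviation Yy :: "complex \<Rightarrow> real^4" where "Yy \<equiv> partial True Y"
abbreviation Nx :: "complex \<Rightarrow> real^4" where "Nx \<equiv> partial False N"
abbreviation Ny :: "complex \<Rightarrow> real^4" where "Ny \<equiv> partial True N"
abbreviation lapl :: "complex \<Rightarrow> real^4" where "lapl q \<equiv> Xx q + Yy q"
abbreviation h1 :: "complex \<Rightarrow> real" where "h1 q \<equiv> X q $ 4"
abbreviation h2 :: "complex \<Rightarrow> real" where "h2 q \<equiv> Y q $ 4"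

lemma differentiable_data:
  assumes q: "q \<in> U"
  shows "\<psi> differentiable (at q)" "N differentiable (at q)"
    "X differentiable (at q)" "Y differentiable (at q)"
    "partial d X differentiable (at q)" "partial d Y differentiable (at q)"
    "partial d N differentiable (at q)"
  using smooth_on_differentiable[OF smooth_\<psi> q] smooth_on_differentiable[OF smooth_N q]
    smooth_on_differentiable[OF smooth_on_partial[OF smooth_\<psi>] q]
    smooth_on_differentiable[OF smooth_on_partial[OF smooth_on_partial[OF smooth_\<psi>]] q]
    smooth_on_differentiable[OF smooth_on_partial[OF smooth_N] q]
  by simp_all

lemma mixed_partials:
  assumes q: "q \<in> U"
  shows "partial True X q = partial False Y q"
    and "partial True (partial False X) q = partial False (partial True X) q"
    and "partial False (partial True Y) q = partial True (partial True X) q"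
proof -
  have XY: "partial True X q' = partial False Y q'" if "q' \<in> U" for q'
    using schwarz[OF U smooth_\<psi> that] .
  then show "partial True X q = partial False Y q" using q .
  show "partial True (partial False X) q = partial False (partial True X) q"
    using schwarz[OF U smooth_on_partial[OF smooth_\<psi>] q] .
  have "partial False (partial True Y) q = partial True (partial False Y) q"
    using schwarz[OF U smooth_on_partial[OF smooth_\<psi>] q] by simp
  also have "\<dots> = partial True (partial True X) q"
    using partial_cong_open[OF U q, of "partial False Y" "partial True X"] XY by metis
  finally show "partial False (partial True Y) q = partial True (partial True X) q" .
qed

lemma constraint_derivatives:
  assumes q: "q \<in> U"
  shows "amb3 \<epsilon> (partial d \<psi> q) (\<psi> q) = 0"
    and "amb \<epsilon> (partial d N q) (N q) = 0"
    and "amb3 \<epsilon> (partial d N q) (\<psi> q) + amb3 \<epsilon> (N q) (partial d \<psi> q) = 0"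
    and "amb \<epsilon> (partial e N q) (partial d \<psi> q) + amb \<epsilon> (N q) (partial e (partial d \<psi>) q) = 0"
proof -
  note diff = differentiable_data[OF q]
  have "partial d (\<lambda>q. amb3 \<epsilon> (\<psi> q) (\<psi> q)) q = 0"
    by (rule partial_const_on[OF U q]) (use inM in \<open>simp add: in_M2R_def\<close>)
  then show "amb3 \<epsilon> (partial d \<psi> q) (\<psi> q) = 0"
    using partial_amb3(1)[OF diff(1) diff(1)] by (simp add: amb3_sym)
  have "partial d (\<lambda>q. amb \<epsilon> (N q) (N q)) q = 0"
    by (rule partial_const_on[OF U q]) (use normal in simp)
  then show "amb \<epsilon> (partial d N q) (N q) = 0"
    using partial_amb(1)[OF diff(2) diff(2)] by (simp add: amb_sym)
  have "partial d (\<lambda>q. amb3 \<epsilon> (N q) (\<psi> q)) q = 0"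
    by (rule partial_const_on[OF U q]) (use normal in simp)
  then show "amb3 \<epsilon> (partial d N q) (\<psi> q) + amb3 \<epsilon> (N q) (partial d \<psi> q) = 0"
    using partial_amb3(1)[OF diff(2) diff(1)] by simp
  have "amb \<epsilon> (N q') (partial d \<psi> q') = 0" if "q' \<in> U" for q'
    using normal that by (cases d) simp_all
  then have "partial e (\<lambda>q. amb \<epsilon> (N q) (partial d \<psi> q)) q = 0"
    by (rule partial_const_on[OF U q])
  moreover have "partial d \<psi> differentiable (at q)" using diff(3,4) by (cases d) simp_all
  ultimately show "amb \<epsilon> (partial e N q) (partial d \<psi> q) + amb \<epsilon> (N q) (partial e (partial d \<psi>) q) = 0"
    using partial_amb(1)[OF diff(2)] by simp
qed

lemma fundI_eq: "fundI \<epsilon> \<psi> i j = (\<lambda>q. amb \<epsilon> (partial i \<psi> q) (partial j \<psi> q))"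
  by (rule ext) (simp add: fundI_def)

lemma fundII_eq:
  assumes q: "q \<in> U"
  shows "fundII \<epsilon> \<psi> N d e q = amb \<epsilon> (N q) (partial e (partial d \<psi>) q)"
  using constraint_derivatives(4)[OF q, of e d] by (simp add: fundII_def amb_sym)

lemma second_fundamental_form:
  assumes q: "q \<in> U"
  shows "lam q = amb \<epsilon> (N q) (partial False X q)"
    and "lam q = amb \<epsilon> (N q) (partial True Y q)"
    and "amb \<epsilon> (N q) (partial True X q) = 0"
    and "lam q > 0"
  using fundII_eq[OF q] conformalII q by metis+

lemma gauss_equation:
  assumes q: "q \<in> U"
  shows "lam q ^ 2 = K * Dt q" and "Dt q > 0"
proof -
  have quotient: "(lam q * lam q) / Dt q = K"
    using curvature conformalII q by (simp add: power2_eq_square)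
  then have "Dt q \<noteq> 0" using Kpos by auto
  then show gauss: "lam q ^ 2 = K * Dt q" using quotient by (simp add: power2_eq_square field_simps)
  have "lam q ^ 2 > 0" using second_fundamental_form(4)[OF q] by simp
  then show "Dt q > 0" using gauss Kpos by (simp add: zero_less_mult_iff)
qed

lemma fundII_values:
  assumes q: "q \<in> U"
  shows "fundII \<epsilon> \<psi> N True True q = lam q"
    and "fundII \<epsilon> \<psi> N False True q = 0"
    and "fundII \<epsilon> \<psi> N True False q = 0"
  using conformalII q fundII_eq[OF q, of True False] fundII_eq[OF q, of False True] mixed_partials(1)[OF q]
  by auto

lemma frame_at:
  assumes q: "q \<in> U"
  shows "Dt q * amb \<epsilon> w u = I22 q * amb \<epsilon> w (X q) * amb \<epsilon> u (X q)
            - I12 q * (amb \<epsilon> w (X q) * amb \<epsilon> u (Y q) + amb \<epsilon> w (Y q) * amb \<epsilon> u (X q))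
            + I11 q * amb \<epsilon> w (Y q) * amb \<epsilon> u (Y q)
          + Dt q * (amb \<epsilon> w (N q) * amb \<epsilon> u (N q) + \<epsilon> * amb \<epsilon> w (pbar (\<psi> q)) * amb \<epsilon> u (pbar (\<psi> q)))"
proof -
  have "amb \<epsilon> w u = (I22 q * amb \<epsilon> w (X q) * amb \<epsilon> u (X q)
            - I12 q * (amb \<epsilon> w (X q) * amb \<epsilon> u (Y q) + amb \<epsilon> w (Y q) * amb \<epsilon> u (X q))
            + I11 q * amb \<epsilon> w (Y q) * amb \<epsilon> u (Y q)) / Dt q
          + amb \<epsilon> w (N q) * amb \<epsilon> u (N q) + \<epsilon> * amb \<epsilon> w (pbar (\<psi> q)) * amb \<epsilon> u (pbar (\<psi> q))"
  proof (rule frame_expansion[OF eps])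
    show "amb \<epsilon> (X q) (X q) = I11 q" "amb \<epsilon> (X q) (Y q) = I12 q" "amb \<epsilon> (Y q) (Y q) = I22 q"
      by (simp_all add: fundI_def)
    show "I11 q * I22 q - (I12 q)^2 \<noteq> 0" using gauss_equation(2)[OF q] by simp
    show "amb \<epsilon> (X q) (N q) = 0" "amb \<epsilon> (Y q) (N q) = 0" "amb \<epsilon> (N q) (N q) = 1"
      using normal q by (simp_all add: amb_sym)
    show "amb \<epsilon> (X q) (pbar (\<psi> q)) = 0" "amb \<epsilon> (Y q) (pbar (\<psi> q)) = 0"
      using constraint_derivatives(1)[OF q] by (simp_all add: amb_pbar)
    show "amb \<epsilon> (N q) (pbar (\<psi> q)) = 0" "amb \<epsilon> (pbar (\<psi> q)) (pbar (\<psi> q)) = \<epsilon>"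
      using normal inM q by (simp_all add: amb_pbar amb3_pbar amb3_sym[of _ "pbar _"] in_M2R_def)
  qed
  then show ?thesis using gauss_equation(2)[OF q] by (simp add: field_simps)
qed

lemma frame_values:
  assumes q: "q \<in> U"
  shows "amb \<epsilon> (partial e N q) (partial d \<psi> q) = - fundII \<epsilon> \<psi> N d e q"
    and "amb \<epsilon> (partial d N q) (N q) = 0"
    and "amb \<epsilon> (partial d N q) (pbar (\<psi> q)) = nu N q * partial d \<psi> q $ 4"
    and "amb \<epsilon> (partial e (partial d \<psi>) q) (N q) = fundII \<epsilon> \<psi> N d e q"
    and "amb \<epsilon> (partial e (partial d \<psi>) q) (pbar (\<psi> q))
           = partial d \<psi> q $ 4 * partial e \<psi> q $ 4 - amb \<epsilon> (partial d \<psi> q) (partial e \<psi> q)"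
proof -
  note diff = differentiable_data[OF q]
  have d\<psi>: "partial d \<psi> differentiable (at q')" if "q' \<in> U" for q' d
    using differentiable_data[OF that] by (cases d) simp_all
  show "amb \<epsilon> (partial e N q) (partial d \<psi> q) = - fundII \<epsilon> \<psi> N d e q"
    by (simp add: fundII_def amb_sym)
  show "amb \<epsilon> (partial d N q) (N q) = 0" by (rule constraint_derivatives(2)[OF q])
  show "amb \<epsilon> (partial d N q) (pbar (\<psi> q)) = nu N q * partial d \<psi> q $ 4"
    using constraint_derivatives(3)[OF q, of d] normal q
    by (cases d) (simp_all add: amb_pbar amb3_amb nu_def)
  show "amb \<epsilon> (partial e (partial d \<psi>) q) (N q) = fundII \<epsilon> \<psi> N d e q"
    using fundII_eq[OF q] by (simp add: amb_sym)
  have "partial e (\<lambda>q. amb3 \<epsilon> (partial d \<psi> q) (\<psi> q)) q = 0"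
    by (rule partial_const_on[OF U q]) (rule constraint_derivatives(1))
  then have "amb3 \<epsilon> (partial e (partial d \<psi>) q) (\<psi> q) + amb3 \<epsilon> (partial d \<psi> q) (partial e \<psi> q) = 0"
    using partial_amb3(1)[OF d\<psi>[OF q] diff(1)] by simp
  then show "amb \<epsilon> (partial e (partial d \<psi>) q) (pbar (\<psi> q))
           = partial d \<psi> q $ 4 * partial e \<psi> q $ 4 - amb \<epsilon> (partial d \<psi> q) (partial e \<psi> q)"
    by (simp add: amb_pbar amb3_amb)
qed

lemma frame_values_at:
  assumes p: "p \<in> U"
  shows "amb \<epsilon> (Nx p) (X p) = - lam p" "amb \<epsilon> (Nx p) (Y p) = 0"
    "amb \<epsilon> (Ny p) (X p) = 0" "amb \<epsilon> (Ny p) (Y p) = - lam p"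
    "amb \<epsilon> (Nx p) (N p) = 0" "amb \<epsilon> (Ny p) (N p) = 0"
    "amb \<epsilon> (Nx p) (pbar (\<psi> p)) = nu N p * h1 p" "amb \<epsilon> (Ny p) (pbar (\<psi> p)) = nu N p * h2 p"
    "amb \<epsilon> (Xx p) (N p) = lam p" "amb \<epsilon> (Xy p) (N p) = 0" "amb \<epsilon> (Yy p) (N p) = lam p"
    "amb \<epsilon> (Xx p) (pbar (\<psi> p)) = h1 p * h1 p - I11 p"
    "amb \<epsilon> (Xy p) (pbar (\<psi> p)) = h1 p * h2 p - I12 p"
    "amb \<epsilon> (Yy p) (pbar (\<psi> p)) = h2 p * h2 p - I22 p"
  using frame_values[OF p] fundII_values[OF p] by (simp_all add: fundI_def)

lemma lam_differentiable:
  assumes p: "p \<in> U"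
  shows "lam differentiable (at p)"
  using differentiable_cong_open[OF U p, of lam "\<lambda>q. amb \<epsilon> (N q) (Xx q)"]
    second_fundamental_form(1) partial_amb(2)[OF differentiable_data(2,5)[OF p]] by blast

text \<open>The Codazzi equations in the form coming from differentiating lam = <N, psi_xx> = <N, psi_yy>
  and 0 = <N, psi_xy>.\<close>

lemma codazzi_raw:
  assumes p: "p \<in> U"
  shows "partial False lam p = amb \<epsilon> (Nx p) (Yy p) - amb \<epsilon> (Ny p) (Xy p)"
    and "partial True lam p = amb \<epsilon> (Ny p) (Xx p) - amb \<epsilon> (Nx p) (Xy p)"
proof -
  note diff = differentiable_data[OF p]
  have via_Xx: "partial d lam p = amb \<epsilon> (partial d N p) (Xx p) + amb \<epsilon> (N p) (partial d Xx p)" for d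
    using partial_cong_open[OF U p, of lam "\<lambda>q. amb \<epsilon> (N q) (Xx q)"] second_fundamental_form(1)
      partial_amb(1)[OF diff(2,5)] by simp
  have via_Yy: "partial d lam p = amb \<epsilon> (partial d N p) (Yy p) + amb \<epsilon> (N p) (partial d Yy p)" for d
    using partial_cong_open[OF U p, of lam "\<lambda>q. amb \<epsilon> (N q) (Yy q)"] second_fundamental_form(2)
      partial_amb(1)[OF diff(2,6)] by simp
  have via_Xy: "0 = amb \<epsilon> (partial d N p) (Xy p) + amb \<epsilon> (N p) (partial d Xy p)" for d
  proof -
    have "partial d (\<lambda>q. amb \<epsilon> (N q) (Xy q)) p = 0"
      by (rule partial_const_on[OF U p]) (rule second_fundamental_form(3))
    then show ?thesis using partial_amb(1)[OF diff(2,5)] by simp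
  qed
  show "partial False lam p = amb \<epsilon> (Nx p) (Yy p) - amb \<epsilon> (Ny p) (Xy p)"
    using via_Yy[of False] via_Xy[of True] mixed_partials(3)[OF p] by simp
  show "partial True lam p = amb \<epsilon> (Ny p) (Xx p) - amb \<epsilon> (Nx p) (Xy p)"
    using via_Xx[of True] via_Xy[of False] mixed_partials(2)[OF p] by simp
qed

lemma fundI_differentiable:
  assumes p: "p \<in> U"
  shows "fundI \<epsilon> \<psi> i j differentiable (at p)"
  unfolding fundI_eq using partial_amb(2) differentiable_data(3,4)[OF p] by (cases i; cases j) auto

lemma fundI_derivatives:
  assumes p: "p \<in> U"
  shows "partial d I11 p = 2 * amb \<epsilon> (partial d X p) (X p)"
    "partial d I12 p = amb \<epsilon> (partial d X p) (Y p) + amb \<epsilon> (X p) (partial d Y p)"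
    "partial d I22 p = 2 * amb \<epsilon> (partial d Y p) (Y p)"
  unfolding fundI_eq using differentiable_data(3,4)[OF p]
  by (simp_all add: partial_amb(1) amb_sym[of _ _ "partial d _ p"])

lemma gauss_derivative:
  assumes p: "p \<in> U"
  shows "lam p * partial d lam p = K * (amb \<epsilon> (partial d X p) (X p) * I22 p
           + I11 p * amb \<epsilon> (partial d Y p) (Y p)
           - I12 p * (amb \<epsilon> (partial d X p) (Y p) + amb \<epsilon> (X p) (partial d Y p)))"
proof -
  note diff = differentiable_data[OF p]
  note dI = fundI_differentiable[OF p] and pI = fundI_derivatives[OF p, of d]
  have "partial d (\<lambda>q. lam q * lam q) p = partial d (\<lambda>q. K * (I11 q * I22 q - I12 q * I12 q)) p"
    by (rule partial_cong_open[OF U p]) (use gauss_equation(1) in \<open>simp add: power2_eq_square\<close>)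
  also have "\<dots> = K * (partial d I11 p * I22 p + I11 p * partial d I22 p - 2 * I12 p * partial d I12 p)"
  proof -
    have d1: "(\<lambda>q. I11 q * I22 q) differentiable (at p)" and d2: "(\<lambda>q. I12 q * I12 q) differentiable (at p)"
      using dI by (auto intro!: derivative_intros)
    show ?thesis
      using partial_cmult[OF differentiable_diff[OF d1 d2]] partial_diff[OF d1 d2]
        partial_mult(1)[OF dI[of False False] dI[of True True]] partial_mult(1)[OF dI[of False True] dI[of False True]]
      by (simp add: algebra_simps)
  qed
  finally show ?thesis
    using partial_mult(1)[OF lam_differentiable[OF p] lam_differentiable[OF p]] unfolding pI
    by (simp add: algebra_simps)
qed

lemma codazzi_frame:
  assumes p: "p \<in> U"
  shows "Dt p * partial False lam p = - lam p * (I22 p * amb \<epsilon> (Yy p) (X p) - I12 p * amb \<epsilon> (Yy p) (Y p)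
            + I12 p * amb \<epsilon> (Xy p) (X p) - I11 p * amb \<epsilon> (Xy p) (Y p))
          - Dt p * \<epsilon> * nu N p * (I22 p * h1 p - I12 p * h2 p)"
    and "Dt p * partial True lam p = - lam p * (I11 p * amb \<epsilon> (Xx p) (Y p) - I12 p * amb \<epsilon> (Xx p) (X p)
            - I22 p * amb \<epsilon> (Xy p) (X p) + I12 p * amb \<epsilon> (Xy p) (Y p))
          - Dt p * \<epsilon> * nu N p * (I11 p * h2 p - I12 p * h1 p)"
proof -
  note vals = frame_values_at[OF p] and scaled = frame_at[OF p]
  show "Dt p * partial False lam p = - lam p * (I22 p * amb \<epsilon> (Yy p) (X p) - I12 p * amb \<epsilon> (Yy p) (Y p)
            + I12 p * amb \<epsilon> (Xy p) (X p) - I11 p * amb \<epsilon> (Xy p) (Y p))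
          - Dt p * \<epsilon> * nu N p * (I22 p * h1 p - I12 p * h2 p)"
    unfolding codazzi_raw(1)[OF p] right_diff_distrib scaled vals by (simp add: algebra_simps)
  show "Dt p * partial True lam p = - lam p * (I11 p * amb \<epsilon> (Xx p) (Y p) - I12 p * amb \<epsilon> (Xx p) (X p)
            - I22 p * amb \<epsilon> (Xy p) (X p) + I12 p * amb \<epsilon> (Xy p) (Y p))
          - Dt p * \<epsilon> * nu N p * (I11 p * h2 p - I12 p * h1 p)"
    unfolding codazzi_raw(2)[OF p] right_diff_distrib scaled vals by (simp add: algebra_simps)
qed

lemma codazzi:
  assumes p: "p \<in> U"
  shows "lam p * amb \<epsilon> (lapl p) (X p) = - \<epsilon> * nu N p * h1 p * Dt p"
    and "lam p * amb \<epsilon> (lapl p) (Y p) = - \<epsilon> * nu N p * h2 p * Dt p"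
proof -
  have YxXy: "partial False Y p = Xy p" using mixed_partials(1)[OF p] by simp
  have gauss_x: "lam p * partial False lam p = K * (I22 p * amb \<epsilon> (Xx p) (X p)
      + I11 p * amb \<epsilon> (Xy p) (Y p) - I12 p * (amb \<epsilon> (Xx p) (Y p) + amb \<epsilon> (Xy p) (X p)))"
    using gauss_derivative[OF p, of False] unfolding YxXy by (simp add: amb_sym[of _ "X p"] algebra_simps)
  have gauss_y: "lam p * partial True lam p = K * (I22 p * amb \<epsilon> (Xy p) (X p)
      + I11 p * amb \<epsilon> (Yy p) (Y p) - I12 p * (amb \<epsilon> (Xy p) (Y p) + amb \<epsilon> (Yy p) (X p)))"
    using gauss_derivative[OF p, of True] by (simp add: amb_sym[of _ "X p"] algebra_simps)
  have "lam p * (amb \<epsilon> (Xx p) (X p) + amb \<epsilon> (Yy p) (X p)) = - \<epsilon> * nu N p * h1 p * Dt p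
      \<and> lam p * (amb \<epsilon> (Xx p) (Y p) + amb \<epsilon> (Yy p) (Y p)) = - \<epsilon> * nu N p * h2 p * Dt p"
    using codazzi_algebra[OF _ _ gauss_equation(1)[OF p] gauss_x gauss_y codazzi_frame[OF p]]
      gauss_equation(2)[OF p] second_fundamental_form(4)[OF p]
    by (simp add: algebra_simps)
  then show "lam p * amb \<epsilon> (lapl p) (X p) = - \<epsilon> * nu N p * h1 p * Dt p"
    and "lam p * amb \<epsilon> (lapl p) (Y p) = - \<epsilon> * nu N p * h2 p * Dt p"
    by (simp_all add: amb_add_left)
qed

lemma height_identities:
  assumes p: "p \<in> U"
  shows "(1 - (nu N p)^2) * Dt p = I22 p * (h1 p)^2 - 2 * I12 p * h1 p * h2 p + I11 p * (h2 p)^2"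
    and "(Nx p $ 4) * Dt p = - lam p * (I22 p * h1 p - I12 p * h2 p)"
    and "(Ny p $ 4) * Dt p = - lam p * (I11 p * h2 p - I12 p * h1 p)"
    and "(lapl p $ 4) * Dt p = I22 p * amb \<epsilon> (lapl p) (X p) * h1 p
           - I12 p * (amb \<epsilon> (lapl p) (X p) * h2 p + amb \<epsilon> (lapl p) (Y p) * h1 p)
           + I11 p * amb \<epsilon> (lapl p) (Y p) * h2 p + 2 * lam p * nu N p * Dt p"
proof -
  note vals = frame_values_at[OF p] and scaled = frame_at[OF p, of _ e4]
  have e4: "e4 $ 4 = 1" "pbar (\<psi> p) $ 4 = 0" by (simp_all add: e4_def pbar_def)
  show "(1 - (nu N p)^2) * Dt p = I22 p * (h1 p)^2 - 2 * I12 p * h1 p * h2 p + I11 p * (h2 p)^2"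
    using scaled[of e4] by (simp add: e4 amb_e4 nu_def power2_eq_square algebra_simps)
  show "(Nx p $ 4) * Dt p = - lam p * (I22 p * h1 p - I12 p * h2 p)"
    using scaled[of "Nx p"] by (simp add: e4 amb_e4 vals algebra_simps)
  show "(Ny p $ 4) * Dt p = - lam p * (I11 p * h2 p - I12 p * h1 p)"
    using scaled[of "Ny p"] by (simp add: e4 amb_e4 vals algebra_simps)
  show "(lapl p $ 4) * Dt p = I22 p * amb \<epsilon> (lapl p) (X p) * h1 p
           - I12 p * (amb \<epsilon> (lapl p) (X p) * h2 p + amb \<epsilon> (lapl p) (Y p) * h1 p)
           + I11 p * amb \<epsilon> (lapl p) (Y p) * h2 p + 2 * lam p * nu N p * Dt p"
    using scaled[of "lapl p"] by (simp add: e4 amb_e4 amb_add_left vals nu_def algebra_simps)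
qed

lemma Ecoef_zbar:
  assumes p: "p \<in> U"
  shows "Ecoef \<epsilon> \<psi> differentiable (at p)"
    and "d_zbar (Ecoef \<epsilon> \<psi>) p = Complex (amb \<epsilon> (lapl p) (X p) / 4) (- amb \<epsilon> (lapl p) (Y p) / 4)"
proof -
  note dI = fundI_differentiable[OF p] and pI = fundI_derivatives[OF p]
  have E: "Ecoef \<epsilon> \<psi> = (\<lambda>q. Complex (1/4 * (I11 q - I22 q)) (-1/2 * I12 q))"
    by (rule ext) (simp add: Ecoef_def)
  have dR: "(\<lambda>q. 1/4 * (I11 q - I22 q)) differentiable (at p)"
    and dJ: "(\<lambda>q. -1/2 * I12 q) differentiable (at p)"
    using dI by (auto intro!: derivative_intros)
  have pR: "partial d (\<lambda>q. 1/4 * (I11 q - I22 q)) p = 1/4 * (partial d I11 p - partial d I22 p)"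
    and pJ: "partial d (\<lambda>q. -1/2 * I12 q) p = -1/2 * partial d I12 p" for d
    by (simp_all only: partial_cmult[OF differentiable_diff[OF dI dI]] partial_diff[OF dI dI]
        partial_cmult[OF dI])
  show "Ecoef \<epsilon> \<psi> differentiable (at p)"
    unfolding E using partial_Complex(2)[OF dR dJ] .
  show "d_zbar (Ecoef \<epsilon> \<psi>) p = Complex (amb \<epsilon> (lapl p) (X p) / 4) (- amb \<epsilon> (lapl p) (Y p) / 4)"
    unfolding E d_zbar_Complex[OF dR dJ] pR pJ pI using mixed_partials(1)[OF p]
    by (simp add: amb_add_left amb_sym[of _ "X p"] field_simps)
qed

lemma h_z_on_U:
  assumes q: "q \<in> U"
  shows "h_z \<psi> q = Complex (1/2 * h1 q) (-1/2 * h2 q)"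
proof -
  have "height \<psi> = (\<lambda>q. \<psi> q $ 4)" by (rule ext) (simp add: height_def)
  then have "partial d (height \<psi>) q = partial d \<psi> q $ 4" for d
    using partial_nth(1)[OF differentiable_data(1)[OF q]] by simp
  then show ?thesis by (simp add: h_z_def)
qed

lemma h_z_zbar:
  assumes p: "p \<in> U"
  shows "h_z \<psi> differentiable (at p)" and "d_zbar (h_z \<psi>) p = of_real (lapl p $ 4 / 4)"
proof -
  note diff = differentiable_data[OF p]
  have dR: "(\<lambda>q. 1/2 * h1 q) differentiable (at p)" and dJ: "(\<lambda>q. -1/2 * h2 q) differentiable (at p)"
    using partial_nth(2)[OF diff(3)] partial_nth(2)[OF diff(4)] by (auto intro!: derivative_intros)
  have pR: "partial d (\<lambda>q. 1/2 * h1 q) p = 1/2 * (partial d X p $ 4)"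
    and pJ: "partial d (\<lambda>q. -1/2 * h2 q) p = -1/2 * (partial d Y p $ 4)" for d
    by (simp_all only: partial_cmult[OF partial_nth(2)[OF diff(3)]] partial_cmult[OF partial_nth(2)[OF diff(4)]]
        partial_nth(1)[OF diff(3)] partial_nth(1)[OF diff(4)])
  show "h_z \<psi> differentiable (at p)"
    using differentiable_cong_open[OF U p h_z_on_U partial_Complex(2)[OF dR dJ]] .
  have "d_zbar (h_z \<psi>) p = d_zbar (\<lambda>q. Complex (1/2 * h1 q) (-1/2 * h2 q)) p"
    by (rule d_zbar_cong_open[OF U p h_z_on_U])
  also have "\<dots> = of_real (lapl p $ 4 / 4)"
    unfolding d_zbar_Complex[OF dR dJ] pR pJ using mixed_partials(1)[OF p]
    by (simp add: complex_eq_iff field_simps)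
  finally show "d_zbar (h_z \<psi>) p = of_real (lapl p $ 4 / 4)" .
qed

lemma nu_zbar:
  assumes p: "p \<in> U"
  shows "nu N differentiable (at p)"
    and "d_zbar (\<lambda>q. of_real (nu N q)) p = Complex (Nx p $ 4 / 2) (Ny p $ 4 / 2)"
proof -
  have nu: "nu N = (\<lambda>q. N q $ 4)" by (rule ext) (simp add: nu_def)
  note dN = differentiable_data(2)[OF p]
  show "nu N differentiable (at p)" unfolding nu by (rule partial_nth(2)[OF dN])
  have "partial d (\<lambda>q. of_real (nu N q) :: complex) p = of_real (partial d N p $ 4)" for d
    unfolding nu using partial_linear(1)[OF bounded_linear_of_real partial_nth(2)[OF dN]]
      partial_nth(1)[OF dN] by simp
  then show "d_zbar (\<lambda>q. of_real (nu N q)) p = Complex (Nx p $ 4 / 2) (Ny p $ 4 / 2)"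
    by (simp add: d_zbar_def complex_eq_iff)
qed

lemma Qfun_zbar:
  assumes p: "p \<in> U"
  shows "d_zbar (Qfun \<epsilon> K \<psi> N) p = d_zbar (Ecoef \<epsilon> \<psi>) p
     + of_real (deriv (gfun \<epsilon> K) (nu N p)) * d_zbar (\<lambda>q. of_real (nu N q)) p * (h_z \<psi> p)^2
     + of_real (gfun \<epsilon> K (nu N p)) * (2 * h_z \<psi> p * d_zbar (h_z \<psi>) p)"
proof -
  note g' = gfun_deriv(1)[OF eps Kpos]
  note dE = Ecoef_zbar(1)[OF p] and dh = h_z_zbar(1)[OF p] and dnu = nu_zbar(1)[OF p]
  have dg: "(\<lambda>q. of_real (gfun \<epsilon> K (nu N q)) :: complex) differentiable (at p)"
    using partial_linear(2)[OF bounded_linear_of_real partial_chain(2)[OF g' dnu]] .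
  have dhh: "(\<lambda>q. h_z \<psi> q * h_z \<psi> q) differentiable (at p)" using differentiable_mult[OF dh dh] .
  have Q: "Qfun \<epsilon> K \<psi> N = (\<lambda>q. Ecoef \<epsilon> \<psi> q + of_real (gfun \<epsilon> K (nu N q)) * (h_z \<psi> q * h_z \<psi> q))"
    by (rule ext) (simp add: Qfun_def power2_eq_square)
  show ?thesis
    unfolding Q d_zbar_add[OF dE differentiable_mult[OF dg dhh]] d_zbar_mult[OF dg dhh]
      d_zbar_chain[OF g' dnu] d_zbar_mult[OF dh dh]
    by (simp add: power2_eq_square algebra_simps)
qed

lemma Qzbar_factorized:
  assumes p: "p \<in> U"
  defines "D \<equiv> deriv (gfun \<epsilon> K) (nu N p)"
    and "C \<equiv> (I22 p * h1 p - I12 p * h2 p) * h2 p - (I11 p * h2 p - I12 p * h1 p) * h1 p"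
  shows "d_zbar (Qfun \<epsilon> K \<psi> N) p
    = Complex ((lam p * D * h2 p * C / (4 * Dt p)) / 2) ((lam p * D * h1 p * C / (4 * Dt p)) / 2)"
proof -
  define g where "g = gfun \<epsilon> K (nu N p)"
  define L1 where "L1 = amb \<epsilon> (lapl p) (X p)"
  define L2 where "L2 = amb \<epsilon> (lapl p) (Y p)"
  have lam: "lam p \<noteq> 0" using second_fundamental_form(4)[OF p] by simp
  note normal_form = codazzi_normal_form[OF gauss_equation(2)[OF p] gauss_equation(1)[OF p] lam
      height_identities(1)[OF p] gfun_deriv(2)[OF eps Kpos] codazzi[OF p] height_identities(4)[OF p]]
  note factorization = qzbar_factorization[OF gauss_equation(2)[OF p] height_identities(1)[OF p]
      normal_form chi_gfun height_identities(2,3)[OF p]]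
  have "d_zbar (Qfun \<epsilon> K \<psi> N) p
    = Complex ((L1/2 + D*(Nx p $ 4 * ((h1 p)^2 - (h2 p)^2)/4 + Ny p $ 4 * h1 p * h2 p/2) + g * h1 p * (lapl p $ 4)/2) / 2)
              ((- L2/2 + D*(Ny p $ 4 * ((h1 p)^2 - (h2 p)^2)/4 - Nx p $ 4 * h1 p * h2 p/2) - g * h2 p * (lapl p $ 4)/2) / 2)"
    unfolding Qfun_zbar[OF p] Ecoef_zbar(2)[OF p] nu_zbar(2)[OF p] h_z_zbar(2)[OF p] h_z_on_U[OF p]
    by (simp add: complex_eq_iff D_def g_def L1_def L2_def field_simps power2_eq_square)
  then show ?thesis unfolding D_def g_def L1_def L2_def factorization C_def .
qed

lemma Q_value:
  assumes p: "p \<in> U"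
  shows "Qfun \<epsilon> K \<psi> N p = Complex ((I11 p - I22 p)/4 + gfun \<epsilon> K (nu N p) * ((h1 p)^2 - (h2 p)^2)/4)
                                 (- I12 p/2 - gfun \<epsilon> K (nu N p) * h1 p * h2 p/2)"
  unfolding Qfun_def Ecoef_def h_z_on_U[OF p] by (simp add: complex_eq_iff field_simps power2_eq_square)

end

theorem lemma7p1:
  fixes \<epsilon> K :: real and U :: "complex set" and \<psi> N :: "complex \<Rightarrow> real^4" and p :: complex
  assumes eps: "\<epsilon> = 1 \<or> \<epsilon> = -1"
    and Kpos: "K > 0"
    and U: "open U"
    and smooth: "smooth_on U \<psi>" "smooth_on U N"
    and inM: "\<forall>q\<in>U. in_M2R \<epsilon> (\<psi> q)"
    and immersion: "\<forall>q\<in>U. inj (frechet_derivative \<psi> (at q))"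
    and normal: "\<forall>q\<in>U. amb \<epsilon> (N q) (N q) = 1 \<and> amb3 \<epsilon> (N q) (\<psi> q) = 0
                    \<and> amb \<epsilon> (N q) (partial False \<psi> q) = 0 \<and> amb \<epsilon> (N q) (partial True \<psi> q) = 0"
    and conformalII: "\<forall>q\<in>U. fundII \<epsilon> \<psi> N False False q = fundII \<epsilon> \<psi> N True True q
                    \<and> fundII \<epsilon> \<psi> N False True q = 0 \<and> fundII \<epsilon> \<psi> N False False q > 0"
    and curvature: "\<forall>q\<in>U. (fundII \<epsilon> \<psi> N False False q * fundII \<epsilon> \<psi> N True True q
                              - (fundII \<epsilon> \<psi> N False True q)^2)
                          / (fundI \<epsilon> \<psi> False False q * fundI \<epsilon> \<psi> True True q
                              - (fundI \<epsilon> \<psi> False True q)^2) = K"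
    and p: "p \<in> U"
  shows "(cmod (d_zbar (Qfun \<epsilon> K \<psi> N) p))^2
          \<le> K * (deriv (gfun \<epsilon> K) (nu N p))^2 * (1 - (nu N p)^2)^2 * (cmod (h_z \<psi> p))^2
             / (4 * chi \<epsilon> K (nu N p)) * (cmod (Qfun \<epsilon> K \<psi> N p))^2"
proof -
  interpret cek_surface \<epsilon> K U \<psi> N
    using eps Kpos U smooth inM normal conformalII curvature by unfold_locales
  define D where "D = deriv (gfun \<epsilon> K) (nu N p)"
  define C where "C = (I22 p * h1 p - I12 p * h2 p) * h2 p - (I11 p * h2 p - I12 p * h1 p) * h1 p"
  define Q2 where "Q2 = (cmod (Qfun \<epsilon> K \<psi> N p))^2"
  have Dt: "Dt p > 0" and gauss: "lam p ^ 2 = K * Dt p" using gauss_equation[OF p] by auto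
  have bound: "chi \<epsilon> K (nu N p) * C^2 \<le> 4 * Dt p * (1 - (nu N p)^2)^2 * Q2"
    using discriminant_bound[OF Dt chi_gfun height_identities(1)[OF p]]
    unfolding C_def Q2_def Q_value[OF p] cmod_power2 by (simp add: field_simps)
  have "(cmod (d_zbar (Qfun \<epsilon> K \<psi> N) p))^2
      = ((lam p * D * h2 p * C / (4 * Dt p)) / 2)^2 + ((lam p * D * h1 p * C / (4 * Dt p)) / 2)^2"
    unfolding Qzbar_factorized[OF p] cmod_power2 D_def C_def by simp
  also have "\<dots> \<le> K * D^2 * (1 - (nu N p)^2)^2 * ((h1 p / 2)^2 + (h2 p / 2)^2) / (4 * chi \<epsilon> K (nu N p)) * Q2"
    by (rule factorized_estimate[OF Dt gauss Kpos chi_pos[OF eps Kpos] bound])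
  also have "\<dots> = K * D^2 * (1 - (nu N p)^2)^2 * (cmod (h_z \<psi> p))^2 / (4 * chi \<epsilon> K (nu N p)) * Q2"
    unfolding h_z_on_U[OF p] cmod_power2 by (simp add: power2_eq_square)
  finally show ?thesis unfolding D_def Q2_def .
qed

end
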